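(* Let $r\ge2$, $\mathbf z=(z_1,\dots,z_r)^\intercal\in\Omega^r$, and $t\in\mathbb C_\infty$ with $|t|_\infty\le1$. Then \[\sum'_{a_1,\dots,a_r\in A}\frac{a_1(t)}{a_1z_1+\dots+a_rz_r}=\tilde\pi\sum_{0\ne a_1\in A}a_1(t)\,u_{a_1}(\mathbf z).\]
   Context: Let $q$ be a prime power, $A=\mathbb F_q[\theta]$, $|\theta|_\infty=q$, $K_\infty=\mathbb F_q((1/\theta))$, $\mathbb C_\infty$ the completion of an algebraic closure of $K_\infty$; $a(t)$ is $a\in A$ with $\theta$ replaced by $t$. Fix $(-\theta)^{1/(q-1)}$, $\tilde\pi=\theta(-\theta)^{1/(q-1)}\prod_{i\ge1}(1-\theta^{1-q^i})^{-1}$. For an $A$-lattice $\Lambda\subset\mathbb C_\infty$ (free finitely generated discrete $A$-module), $\exp_\Lambda(x)=x\prod_{0\ne\lambda\in\Lambda}(1-x/\lambda)$. $\Omega^r$: vectors $\mathbf z=(z_1,\dots,z_r)^\intercal\in\mathbb C_\infty^r$ with $K_\infty$-linearly independent entries and $z_r=1$; $\tilde{\mathbf z}=(z_2,\dots,z_r)^\intercal$, $\tilde\pi\tilde{\mathbf z}A=A\tilde\pi z_2+\dots+A\tilde\pi z_r$. For $a\in A$, $u_a(\mathbf z)=\exp_{\tilde\pi\tilde{\mathbf z}A}(\tilde\pi az_1)^{-1}$. $\sum'$ excludes $(a_1,\dots,a_r)=(0,\dots,0)$. *)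

theory Defs
  imports "HOL-Computational_Algebra.Polynomial" "HOL-Library.Cardinality"
begin

text \<open>
  The field C_infinity is modelled abstractly: a field type 'c together with an embedding
  iota of the finite field F_q (a finite field type 'f, q = CARD('f)), an element theta,
  and an absolute value absv, subject to the conditions characterising C_infinity up to
  isomorphism (see Cinf_model).  A = F_q[theta] is the type 'f poly; an element a of A
  is sent to C_infinity by evaluation at theta, and a(t) is evaluation at t.
\<close>

definition evalA :: "('f::field \<Rightarrow> 'c::field) \<Rightarrow> 'f poly \<Rightarrow> 'c \<Rightarrow> 'c" where
  "evalA \<iota> a x = poly (map_poly \<iota> a) x"

definition aseq_lim :: "('c::ab_group_add \<Rightarrow> real) \<Rightarrow> (nat \<Rightarrow> 'c) \<Rightarrow> 'c \<Rightarrow> bool" where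
  "aseq_lim absv X L \<longleftrightarrow> (\<forall>e>0. \<exists>N. \<forall>n\<ge>N. absv (X n - L) < e)"

definition ahas_sum :: "('c::ab_group_add \<Rightarrow> real) \<Rightarrow> ('i \<Rightarrow> 'c) \<Rightarrow> 'i set \<Rightarrow> 'c \<Rightarrow> bool" where
  "ahas_sum absv f S s \<longleftrightarrow>
     (\<forall>e>0. \<exists>F0. finite F0 \<and> F0 \<subseteq> S \<and>
        (\<forall>F. finite F \<and> F0 \<subseteq> F \<and> F \<subseteq> S \<longrightarrow> absv (sum f F - s) < e))"

definition ahas_prod :: "('c::comm_ring_1 \<Rightarrow> real) \<Rightarrow> ('i \<Rightarrow> 'c) \<Rightarrow> 'i set \<Rightarrow> 'c \<Rightarrow> bool" where
  "ahas_prod absv f S p \<longleftrightarrow>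
     (\<forall>e>0. \<exists>F0. finite F0 \<and> F0 \<subseteq> S \<and>
        (\<forall>F. finite F \<and> F0 \<subseteq> F \<and> F \<subseteq> S \<longrightarrow> absv (prod f F - p) < e))"

text \<open>C_infinity: an algebraically closed field, complete for a non-archimedean absolute
  value with |theta| = q, containing F_q, in which the algebraic closure of F_q(theta) is dense.\<close>

definition Cinf_model :: "('f::{finite,field} \<Rightarrow> 'c::field) \<Rightarrow> 'c \<Rightarrow> ('c \<Rightarrow> real) \<Rightarrow> bool" where
  "Cinf_model \<iota> \<theta> absv \<longleftrightarrow>
     \<iota> 0 = 0 \<and> \<iota> 1 = 1 \<and> (\<forall>x y. \<iota> (x + y) = \<iota> x + \<iota> y) \<and> (\<forall>x y. \<iota> (x * y) = \<iota> x * \<iota> y)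
   \<and> (\<forall>x. absv x \<ge> 0) \<and> (\<forall>x. absv x = 0 \<longleftrightarrow> x = 0)
   \<and> (\<forall>x y. absv (x * y) = absv x * absv y)
   \<and> (\<forall>x y. absv (x + y) \<le> max (absv x) (absv y))
   \<and> absv \<theta> = real CARD('f)
   \<and> (\<forall>X. (\<forall>e>0. \<exists>N. \<forall>m\<ge>N. \<forall>n\<ge>N. absv (X m - X n) < e) \<longrightarrow> (\<exists>L. aseq_lim absv X L))
   \<and> (\<forall>p::'c poly. degree p > 0 \<longrightarrow> (\<exists>x. poly p x = 0))
   \<and> (\<forall>x e. e > 0 \<longrightarrow> (\<exists>y. absv (x - y) < e \<and>
        (\<exists>p::'f poly poly. p \<noteq> 0 \<and> poly (map_poly (\<lambda>b. evalA \<iota> b \<theta>) p) y = 0)))"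

definition Kinf :: "('f::field \<Rightarrow> 'c::field) \<Rightarrow> 'c \<Rightarrow> ('c \<Rightarrow> real) \<Rightarrow> 'c set" where
  "Kinf \<iota> \<theta> absv = {x. \<forall>e>0. \<exists>a b. b \<noteq> 0 \<and> absv (x - evalA \<iota> a \<theta> / evalA \<iota> b \<theta>) < e}"

definition Omega :: "('f::field \<Rightarrow> 'c::field) \<Rightarrow> 'c \<Rightarrow> ('c \<Rightarrow> real) \<Rightarrow> nat \<Rightarrow> (nat \<Rightarrow> 'c) set" where
  "Omega \<iota> \<theta> absv r = {z. z r = 1 \<and>
     (\<forall>c. (\<forall>i\<in>{1..r}. c i \<in> Kinf \<iota> \<theta> absv) \<longrightarrow> (\<Sum>i=1..r. c i * z i) = 0 \<longrightarrow> (\<forall>i\<in>{1..r}. c i = 0))}"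

text \<open>pi-tilde = theta * zeta * prod_{i>=1} (1 - theta^(1-q^i))^(-1), where zeta is the fixed
  (q-1)-st root of -theta.\<close>

definition pitilde :: "('f::{finite,field} \<Rightarrow> 'c::field) \<Rightarrow> 'c \<Rightarrow> ('c \<Rightarrow> real) \<Rightarrow> 'c \<Rightarrow> 'c" where
  "pitilde \<iota> \<theta> absv \<zeta> = \<theta> * \<zeta> *
     (THE L. aseq_lim absv (\<lambda>n. \<Prod>i=1..n. inverse (1 - inverse (\<theta> ^ (CARD('f) ^ i - 1)))) L)"

definition zlattice :: "('f::{finite,field} \<Rightarrow> 'c::field) \<Rightarrow> 'c \<Rightarrow> ('c \<Rightarrow> real) \<Rightarrow> 'c \<Rightarrow> nat \<Rightarrow> (nat \<Rightarrow> 'c) \<Rightarrow> 'c set" where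
  "zlattice \<iota> \<theta> absv \<zeta> r z =
     {\<Sum>i=2..r. pitilde \<iota> \<theta> absv \<zeta> * evalA \<iota> (a i) \<theta> * z i | a. True}"

definition expL :: "('c::field \<Rightarrow> real) \<Rightarrow> 'c set \<Rightarrow> 'c \<Rightarrow> 'c" where
  "expL absv Lam x = x * (THE P. ahas_prod absv (\<lambda>l. 1 - x / l) (Lam - {0}) P)"

definition uA :: "('f::{finite,field} \<Rightarrow> 'c::field) \<Rightarrow> 'c \<Rightarrow> ('c \<Rightarrow> real) \<Rightarrow> 'c \<Rightarrow> nat \<Rightarrow> 'f poly \<Rightarrow> (nat \<Rightarrow> 'c) \<Rightarrow> 'c" where
  "uA \<iota> \<theta> absv \<zeta> r a z =
     inverse (expL absv (zlattice \<iota> \<theta> absv \<zeta> r z) (pitilde \<iota> \<theta> absv \<zeta> * evalA \<iota> a \<theta> * z 1))"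

end

(*
  Group the left-hand sum by the first coordinate a_1; the vectors with a_1 = 0 contribute
  nothing since a_1(t) = 0.  For a_1 /= 0 the vectors (a_2, ..., a_r) correspond to the points of
  the lattice Lambda = pitilde (z_2 A + ... + z_r A), and with x = pitilde a_1 z_1 (not in Lambda)
  the inner sum is pitilde a_1(t) times sum_{l in Lambda} 1/(x - l) = 1/exp_Lambda(x).  The latter
  identity holds exactly for every finite additive subgroup V, because the derivative of
  prod_{l in V} (l - X) is constant, and it passes to the limit over the finite subgroups
  {l in Lambda. |l| <= n}.  These are finite, and all sums converge unconditionally, because
  z_1, ..., z_r are K_infinity-linearly independent: by the equivalence of norms on a finite
  dimensional space, |a_1 z_1 + ... + a_r z_r| bounds every |a_i|.
*)
theory Submission
  imports Defs
begin

section \<open>Non-archimedean absolute values\<close>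

locale nonarch_abs =
  fixes absv :: "'a::field \<Rightarrow> real"
  assumes absv_nonneg: "absv x \<ge> 0"
    and absv_eq_0_iff [simp]: "absv x = 0 \<longleftrightarrow> x = 0"
    and absv_mult: "absv (x * y) = absv x * absv y"
    and absv_add_le_max: "absv (x + y) \<le> max (absv x) (absv y)"
begin

lemma absv_0 [simp]: "absv 0 = 0"
  by simp

lemma absv_pos_iff: "absv x > 0 \<longleftrightarrow> x \<noteq> 0"
  using absv_nonneg[of x] by (auto simp: order_le_less)

lemma absv_1 [simp]: "absv 1 = 1"
  using absv_mult[of 1 1] by simp

lemma absv_minus [simp]: "absv (- x) = absv x"
proof -
  have "(absv (- 1) - 1) * (absv (- 1) + 1) = 0"
    using absv_mult[of "- 1" "- 1"] by (simp add: algebra_simps)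
  moreover have "absv (- 1) + 1 \<noteq> 0"
    using absv_nonneg[of "- 1"] by linarith
  ultimately show ?thesis
    using absv_mult[of "- 1" x] by simp
qed

lemma absv_minus_commute: "absv (x - y) = absv (y - x)"
  by (metis absv_minus minus_diff_eq)

lemma absv_diff_le_max: "absv (x - y) \<le> max (absv x) (absv y)"
  using absv_add_le_max[of x "- y"] by simp

lemma absv_add_le: "absv (x + y) \<le> absv x + absv y"
  using absv_add_le_max[of x y] absv_nonneg[of x] absv_nonneg[of y] by linarith

lemma absv_inverse: "absv (inverse x) = inverse (absv x)"
proof (cases "x = 0")
  case False
  then have "absv x * absv (inverse x) = 1"
    by (simp flip: absv_mult)
  then show ?thesis
    by (metis inverse_unique)
qed simp

lemma absv_divide: "absv (x / y) = absv x / absv y"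
  by (simp add: divide_inverse absv_mult absv_inverse)

lemma absv_power: "absv (x ^ n) = absv x ^ n"
  by (induction n) (simp_all add: absv_mult)

lemma absv_add_eq_left: "absv y < absv x \<Longrightarrow> absv (x + y) = absv x"
  using absv_add_le_max[of x y] absv_diff_le_max[of "x + y" y] by simp

lemma absv_sum_less:
  "finite F \<Longrightarrow> e > 0 \<Longrightarrow> (\<And>i. i \<in> F \<Longrightarrow> absv (f i) < e) \<Longrightarrow> absv (sum f F) < e"
proof (induction F rule: finite_induct)
  case (insert x F)
  then show ?case
    by (simp add: le_less_trans[OF absv_add_le_max])
qed simp

lemma absv_prod_minus_1_less:
  assumes "finite F" "e > 0" "e \<le> 1" "\<And>i. i \<in> F \<Longrightarrow> absv (g i - 1) < e"
  shows "absv (prod g F - 1) < e"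
  using assms
proof (induction F rule: finite_induct)
  case (insert x F)
  let ?Q = "prod g F"
  have IH: "absv (?Q - 1) < e"
    using insert by auto
  then have "absv ?Q \<le> 1"
    using absv_add_le_max[of "?Q - 1" 1] \<open>e \<le> 1\<close> by simp
  then have "absv (g x - 1) * absv ?Q \<le> absv (g x - 1)"
    using absv_nonneg[of "g x - 1"] by (rule mult_left_le)
  then have step: "absv ((g x - 1) * ?Q) < e"
    using insert.prems(3)[of x] by (simp add: absv_mult)
  have eq: "prod g (insert x F) - 1 = (g x - 1) * ?Q + (?Q - 1)"
    using insert.hyps by (simp add: algebra_simps)
  show ?case
    unfolding eq by (rule le_less_trans[OF absv_add_le_max]) (use IH step in simp)
qed simp

lemma absv_prod_eq_1:
  assumes "finite F" "e > 0" "e \<le> 1" "\<And>i. i \<in> F \<Longrightarrow> absv (g i - 1) < e"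
  shows "absv (prod g F) = 1"
proof -
  have "absv (prod g F - 1) < e"
    using assms by (rule absv_prod_minus_1_less)
  then have "absv (prod g F - 1) < absv 1"
    using assms(3) by simp
  then show ?thesis
    using absv_add_eq_left[of "prod g F - 1" 1] by simp
qed

end

definition abs_tendsto :: "('c::ab_group_add \<Rightarrow> real) \<Rightarrow> ('x \<Rightarrow> 'c) \<Rightarrow> 'c \<Rightarrow> 'x filter \<Rightarrow> bool" where
  "abs_tendsto absv f L F \<longleftrightarrow> ((\<lambda>x. absv (f x - L)) \<longlongrightarrow> 0) F"

context nonarch_abs
begin

lemma abs_tendsto_iff: "abs_tendsto absv f L F \<longleftrightarrow> (\<forall>e>0. eventually (\<lambda>x. absv (f x - L) < e) F)"
  unfolding abs_tendsto_def tendsto_iff by (simp add: absv_nonneg)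

lemma aseq_lim_iff_abs_tendsto: "aseq_lim absv X L \<longleftrightarrow> abs_tendsto absv X L sequentially"
  unfolding abs_tendsto_iff aseq_lim_def eventually_sequentially ..

lemma ahas_sum_iff_abs_tendsto:
  "ahas_sum absv f S s \<longleftrightarrow> abs_tendsto absv (sum f) s (finite_subsets_at_top S)"
  unfolding abs_tendsto_iff ahas_sum_def eventually_finite_subsets_at_top ..

lemma ahas_prod_iff_abs_tendsto:
  "ahas_prod absv f S p \<longleftrightarrow> abs_tendsto absv (prod f) p (finite_subsets_at_top S)"
  unfolding abs_tendsto_iff ahas_prod_def eventually_finite_subsets_at_top ..

lemma abs_tendsto_if_bound:
  assumes "(u \<longlongrightarrow> 0) F" "eventually (\<lambda>x. absv (f x - L) \<le> u x) F"
  shows "abs_tendsto absv f L F"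
  unfolding abs_tendsto_def by (rule tendsto_sandwich[OF _ assms(2) tendsto_const assms(1)]) (simp add: absv_nonneg)

lemma abs_tendsto_unique:
  assumes "F \<noteq> bot" "abs_tendsto absv f L F" "abs_tendsto absv f L' F"
  shows "L = L'"
proof -
  have "((\<lambda>x. absv (f x - L) + absv (f x - L')) \<longlongrightarrow> 0 + 0) F"
    using assms(2,3) unfolding abs_tendsto_def by (rule tendsto_add)
  moreover have "absv (L' - L) \<le> absv (f x - L) + absv (f x - L')" for x
    using absv_add_le[of "f x - L" "L' - f x"] absv_minus_commute[of L' "f x"] by simp
  ultimately have "abs_tendsto absv (\<lambda>_. L') L F"
    by (intro abs_tendsto_if_bound[of "\<lambda>x. absv (f x - L) + absv (f x - L')"] always_eventually allI)
      simp_all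
  then have "absv (L' - L) = 0"
    unfolding abs_tendsto_def using tendsto_const_iff[OF assms(1)] by blast
  then show ?thesis
    by simp
qed

lemma abs_tendsto_const: "abs_tendsto absv (\<lambda>_. c) c F"
  by (simp add: abs_tendsto_def)

lemma abs_tendsto_add:
  assumes "abs_tendsto absv f L F" "abs_tendsto absv g M F"
  shows "abs_tendsto absv (\<lambda>x. f x + g x) (L + M) F"
proof -
  have "((\<lambda>x. absv (f x - L) + absv (g x - M)) \<longlongrightarrow> 0 + 0) F"
    using assms unfolding abs_tendsto_def by (rule tendsto_add)
  moreover have "absv (f x + g x - (L + M)) \<le> absv (f x - L) + absv (g x - M)" for x
    using absv_add_le[of "f x - L" "g x - M"] by (simp add: algebra_simps)
  ultimately show ?thesis
    by (intro abs_tendsto_if_bound[of "\<lambda>x. absv (f x - L) + absv (g x - M)"] always_eventually allI)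
      simp_all
qed

lemma abs_tendsto_mult:
  assumes "abs_tendsto absv f L F" "abs_tendsto absv g M F"
  shows "abs_tendsto absv (\<lambda>x. f x * g x) (L * M) F"
proof -
  define a where "a x = absv (f x - L)" for x
  define b where "b x = absv (g x - M)" for x
  have a: "(a \<longlongrightarrow> 0) F" and b: "(b \<longlongrightarrow> 0) F"
    using assms unfolding abs_tendsto_def a_def b_def by auto
  have "((\<lambda>x. a x * b x + a x * absv M + absv L * b x) \<longlongrightarrow> 0 * 0 + 0 * absv M + absv L * 0) F"
    by (intro tendsto_add tendsto_mult tendsto_const a b)
  then have lim: "((\<lambda>x. a x * b x + a x * absv M + absv L * b x) \<longlongrightarrow> 0) F"
    by simp
  have bound: "absv (f x * g x - L * M) \<le> a x * b x + a x * absv M + absv L * b x" for x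
  proof -
    have eq: "f x * g x - L * M = (f x - L) * (g x - M) + (f x - L) * M + L * (g x - M)"
      by (simp add: algebra_simps)
    have "absv ((f x - L) * (g x - M) + (f x - L) * M + L * (g x - M))
        \<le> absv ((f x - L) * (g x - M)) + absv ((f x - L) * M) + absv (L * (g x - M))"
      using absv_add_le[of "(f x - L) * (g x - M) + (f x - L) * M" "L * (g x - M)"]
        absv_add_le[of "(f x - L) * (g x - M)" "(f x - L) * M"] by linarith
    then show ?thesis
      unfolding eq a_def b_def by (simp add: absv_mult)
  qed
  show ?thesis
    using lim by (rule abs_tendsto_if_bound) (simp add: bound)
qed

lemma abs_tendsto_sum:
  "finite I \<Longrightarrow> (\<And>i. i \<in> I \<Longrightarrow> abs_tendsto absv (f i) (L i) F)
    \<Longrightarrow> abs_tendsto absv (\<lambda>x. \<Sum>i\<in>I. f i x) (\<Sum>i\<in>I. L i) F"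
  by (induction I rule: finite_induct) (simp_all add: abs_tendsto_const abs_tendsto_add)

lemma abs_tendsto_compose:
  "abs_tendsto absv f L F' \<Longrightarrow> filterlim g F' F \<Longrightarrow> abs_tendsto absv (\<lambda>x. f (g x)) L F"
  unfolding abs_tendsto_def by (rule filterlim_compose)

lemma abs_tendsto_cong:
  "eventually (\<lambda>x. f x = g x) F \<Longrightarrow> abs_tendsto absv f L F \<longleftrightarrow> abs_tendsto absv g L F"
  unfolding abs_tendsto_def by (rule tendsto_cong) (auto elim: eventually_mono)

lemma aseq_lim_unique: "aseq_lim absv X L \<Longrightarrow> aseq_lim absv X L' \<Longrightarrow> L = L'"
  using abs_tendsto_unique[of sequentially X L L'] by (simp add: aseq_lim_iff_abs_tendsto)

lemma ahas_prod_unique: "ahas_prod absv f S p \<Longrightarrow> ahas_prod absv f S p' \<Longrightarrow> p = p'"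
  using abs_tendsto_unique[of "finite_subsets_at_top S" "prod f" p p']
  by (simp add: ahas_prod_iff_abs_tendsto)

end

section \<open>Completeness and existence of unconditional sums and products\<close>

lemma level_sets_Suc_mono:
  assumes "m \<le> n"
  shows "{x\<in>S. 1 / real (Suc m) \<le> h x} \<subseteq> {x\<in>S. 1 / real (Suc n) \<le> h x}"
proof -
  have "1 / real (Suc n) \<le> 1 / real (Suc m)"
    using assms by (simp add: frac_le)
  then show ?thesis
    by (auto intro: order_trans)
qed

locale complete_nonarch_abs = nonarch_abs +
  assumes absv_complete:
    "(\<forall>e>0. \<exists>N. \<forall>m\<ge>N. \<forall>n\<ge>N. absv (X m - X n) < e) \<Longrightarrow> \<exists>L. aseq_lim absv X L"
begin

lemma eventually_const_over_Suc_less: "e > 0 \<Longrightarrow> eventually (\<lambda>n. K / real (Suc n) < e) sequentially"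
  using tendsto_mult[OF tendsto_const LIMSEQ_inverse_real_of_nat, of K]
  by (auto simp: divide_inverse dest: order_tendstoD(2))

lemma aseq_lim_exists_if_rate:
  assumes "\<And>m n. n \<le> m \<Longrightarrow> absv (X m - X n) \<le> K / real (Suc n)"
  shows "\<exists>L. aseq_lim absv X L"
proof (rule absv_complete, intro allI impI)
  fix e :: real
  assume "e > 0"
  then obtain N where N: "\<And>n. n \<ge> N \<Longrightarrow> K / real (Suc n) < e"
    using eventually_const_over_Suc_less[of e K] by (auto simp: eventually_sequentially)
  have "absv (X m - X n) < e" if "m \<ge> N" "n \<ge> N" for m n
  proof (cases "n \<le> m")
    case True
    then show ?thesis using assms[of n m] N[of n] that by simp
  next
    case False
    then show ?thesis using assms[of m n] N[of m] that absv_minus_commute[of "X m"] by simp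
  qed
  then show "\<exists>N. \<forall>m\<ge>N. \<forall>n\<ge>N. absv (X m - X n) < e"
    by (intro exI[of _ N]) simp
qed

lemma abs_tendsto_finite_subsets_exists:
  assumes mono: "\<And>m n. m \<le> n \<Longrightarrow> E m \<subseteq> E n"
    and E: "\<And>n. finite (E n)" "\<And>n. E n \<subseteq> S"
    and tail: "\<And>n G. finite G \<Longrightarrow> E n \<subseteq> G \<Longrightarrow> G \<subseteq> S \<Longrightarrow> absv (g G - g (E n)) \<le> K / real (Suc n)"
  shows "\<exists>s. abs_tendsto absv g s (finite_subsets_at_top S)"
proof -
  have "absv (g (E m) - g (E n)) \<le> K / real (Suc n)" if "n \<le> m" for m n
    using tail[OF E(1) mono[OF that] E(2)] .
  then obtain s where s: "aseq_lim absv (\<lambda>n. g (E n)) s"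
    using aseq_lim_exists_if_rate[of "\<lambda>n. g (E n)" K] by blast
  have "eventually (\<lambda>G. absv (g G - s) < e) (finite_subsets_at_top S)" if "e > 0" for e
  proof -
    have "eventually (\<lambda>n. absv (g (E n) - s) < e \<and> K / real (Suc n) < e) sequentially"
      using s that eventually_const_over_Suc_less[OF that]
      by (simp add: aseq_lim_iff_abs_tendsto abs_tendsto_iff eventually_conj)
    then obtain n where n: "absv (g (E n) - s) < e" "K / real (Suc n) < e"
      by (auto simp: eventually_sequentially)
    have close: "absv (g G - s) < e" if "finite G" "E n \<subseteq> G" "G \<subseteq> S" for G
      using absv_add_le_max[of "g G - g (E n)" "g (E n) - s"] tail[OF that] n by simp
    show ?thesis
      unfolding eventually_finite_subsets_at_top
      by (intro exI[of _ "E n"] conjI allI impI E close) auto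
  qed
  then show ?thesis
    unfolding abs_tendsto_iff by (intro exI[of _ s]) simp
qed

lemma ahas_sum_exists:
  assumes "\<And>e. e > 0 \<Longrightarrow> finite {x\<in>S. e \<le> absv (f x)}"
  shows "\<exists>s. ahas_sum absv f S s"
proof -
  define E where "E n = {x\<in>S. 1 / real (Suc n) \<le> absv (f x)}" for n
  have "\<exists>s. abs_tendsto absv (sum f) s (finite_subsets_at_top S)"
  proof (rule abs_tendsto_finite_subsets_exists[of E])
    show "E m \<subseteq> E n" if "m \<le> n" for m n
      unfolding E_def using that by (rule level_sets_Suc_mono)
    show "finite (E n)" for n
      using assms by (simp add: E_def)
    show "E n \<subseteq> S" for n
      by (auto simp: E_def)
    fix n G
    assume G: "finite G" "E n \<subseteq> G" "G \<subseteq> S"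
    then have "absv (sum f (G - E n)) < 1 / real (Suc n)"
      by (intro absv_sum_less) (auto simp: E_def)
    then show "absv (sum f G - sum f (E n)) \<le> 1 / real (Suc n)"
      using G by (simp add: sum_diff)
  qed
  then show ?thesis
    unfolding ahas_sum_iff_abs_tendsto .
qed

lemma ahas_prod_exists:
  assumes "\<And>e. e > 0 \<Longrightarrow> finite {x\<in>S. e \<le> absv (g x - 1)}"
  shows "\<exists>p. ahas_prod absv g S p"
proof -
  define E where "E n = {x\<in>S. 1 / real (Suc n) \<le> absv (g x - 1)}" for n
  have E: "finite (E n)" "E n \<subseteq> S" for n
    using assms by (auto simp: E_def)
  have mono: "E m \<subseteq> E n" if "m \<le> n" for m n
    unfolding E_def using that by (rule level_sets_Suc_mono)
  have rest: "absv (g x - 1) < 1 / real (Suc n)" if "x \<in> G - E n" "G \<subseteq> S" for x G n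
    using that by (auto simp: E_def)
  define B where "B = absv (prod g (E 0))"
  have B: "absv (prod g (E n)) = B" for n
  proof -
    have "prod g (E n) = prod g (E n - E 0) * prod g (E 0)"
      using mono[of 0 n] E(1)[of n] by (intro prod.subset_diff) auto
    moreover have "absv (prod g (E n - E 0)) = 1"
      using E[of n] rest[of _ "E n" 0] by (intro absv_prod_eq_1[of _ 1]) auto
    ultimately show ?thesis
      by (simp add: B_def absv_mult)
  qed
  have "\<exists>p. abs_tendsto absv (prod g) p (finite_subsets_at_top S)"
  proof (rule abs_tendsto_finite_subsets_exists[of E, OF mono E])
    fix n G
    assume G: "finite G" "E n \<subseteq> G" "G \<subseteq> S"
    then have "prod g G - prod g (E n) = prod g (E n) * (prod g (G - E n) - 1)"
      by (simp add: prod.subset_diff[of "E n" G] algebra_simps)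
    then have "absv (prod g G - prod g (E n)) = B * absv (prod g (G - E n) - 1)"
      by (simp add: absv_mult B)
    also have "\<dots> \<le> B * (1 / real (Suc n))"
      using absv_prod_minus_1_less[of "G - E n" "1 / real (Suc n)" g] rest[of _ G n] G
        B[of n] absv_nonneg[of "prod g (E n)"]
      by (intro mult_left_mono) auto
    finally show "absv (prod g G - prod g (E n)) \<le> B / real (Suc n)"
      by simp
  qed
  then show ?thesis
    unfolding ahas_prod_iff_abs_tendsto .
qed

lemma aseq_lim_prod_absv_1:
  assumes "\<And>i. i \<ge> 1 \<Longrightarrow> absv (g i) = 1" "\<And>i. i \<ge> 1 \<Longrightarrow> absv (g i - 1) \<le> 1 / real (Suc i)"
  shows "\<exists>L. aseq_lim absv (\<lambda>n. \<Prod>i=1..n. g i) L \<and> absv L = 1"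
proof -
  define P where "P n = (\<Prod>i=1..n. g i)" for n
  have P_Suc: "P (Suc n) = P n * g (Suc n)" for n
    by (simp add: P_def prod.nat_ivl_Suc')
  have P_1: "absv (P n) = 1" for n
    by (induction n) (simp_all add: P_Suc absv_mult assms(1), simp add: P_def)
  have rate: "absv (P m - P n) \<le> 1 / real (Suc n)" if "n \<le> m" for m n
    using that
  proof (induction m rule: dec_induct)
    case (step m)
    have "absv (P m * (g (Suc m) - 1)) \<le> 1 / real (Suc (Suc m))"
      using assms(2)[of "Suc m"] by (simp add: absv_mult P_1)
    also have "\<dots> \<le> 1 / real (Suc n)"
      using step.hyps(1) by (simp add: frac_le)
    finally have "absv (P m * (g (Suc m) - 1)) \<le> 1 / real (Suc n)" .
    moreover have eq: "P (Suc m) - P n = P m * (g (Suc m) - 1) + (P m - P n)"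
      by (simp add: P_Suc algebra_simps)
    ultimately show ?case
      unfolding eq using step.IH by (intro order_trans[OF absv_add_le_max]) simp
  qed simp
  obtain L where L: "aseq_lim absv P L"
    using aseq_lim_exists_if_rate[of P 1] rate by blast
  then obtain N where "absv (L - P N) < 1"
    unfolding aseq_lim_def using absv_minus_commute by (metis order_refl zero_less_one)
  then have "absv (P N + (L - P N)) = 1"
    using absv_add_eq_left[of "L - P N" "P N"] P_1 by simp
  then show ?thesis
    using L unfolding P_def by auto
qed

end

section \<open>Rearranging unconditional sums\<close>

lemma eventually_subset_finite_subsets_at_top: "eventually (\<lambda>F. F \<subseteq> S) (finite_subsets_at_top S)"
  by (auto simp: eventually_finite_subsets_at_top)

context nonarch_abs
begin

lemma ahas_sum_cong:
  assumes "\<And>x. x \<in> S \<Longrightarrow> f x = g x" "ahas_sum absv f S s"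
  shows "ahas_sum absv g S s"
proof -
  have "eventually (\<lambda>F. sum f F = sum g F) (finite_subsets_at_top S)"
    using eventually_subset_finite_subsets_at_top
    by (rule eventually_mono) (use assms(1) in \<open>auto intro: sum.cong\<close>)
  from abs_tendsto_cong[OF this] assms(2) show ?thesis
    unfolding ahas_sum_iff_abs_tendsto by (rule iffD1)
qed

lemma ahas_sum_0:
  assumes "\<And>x. x \<in> S \<Longrightarrow> f x = 0"
  shows "ahas_sum absv f S 0"
proof -
  have "ahas_sum absv (\<lambda>_. 0) S 0"
    unfolding ahas_sum_def by (intro allI impI exI[of _ "{}"]) simp
  then show ?thesis
    by (rule ahas_sum_cong[rotated]) (simp add: assms)
qed

lemma ahas_sum_cmult_left:
  assumes "ahas_sum absv f S s"
  shows "ahas_sum absv (\<lambda>x. c * f x) S (c * s)"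
proof -
  have "sum (\<lambda>x. c * f x) = (\<lambda>F. c * sum f F)"
    by (simp add: sum_distrib_left fun_eq_iff)
  then show ?thesis
    using abs_tendsto_mult[OF abs_tendsto_const, of "sum f" s _ c] assms
    by (simp add: ahas_sum_iff_abs_tendsto)
qed

lemma ahas_sum_reindex_bij_betw:
  assumes h: "bij_betw h A B" and g: "ahas_sum absv g B s"
  shows "ahas_sum absv (\<lambda>x. g (h x)) A s"
proof -
  have "filterlim ((`) h) (finite_subsets_at_top B) (finite_subsets_at_top A)"
    using h filtermap_image_finite_subsets_at_top[of h A] by (simp add: bij_betw_def filterlim_def)
  with g have lim: "abs_tendsto absv (\<lambda>F. sum g (h ` F)) s (finite_subsets_at_top A)"
    unfolding ahas_sum_iff_abs_tendsto by (rule abs_tendsto_compose)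
  have "eventually (\<lambda>F. sum g (h ` F) = (\<Sum>x\<in>F. g (h x))) (finite_subsets_at_top A)"
    using eventually_subset_finite_subsets_at_top
    by (rule eventually_mono) (simp add: sum.reindex inj_on_subset[OF bij_betw_imp_inj_on[OF h]])
  from abs_tendsto_cong[OF this] lim show ?thesis
    unfolding ahas_sum_iff_abs_tendsto by (rule iffD1)
qed

lemma ahas_sum_Diff:
  assumes "ahas_sum absv f S s" "\<And>x. x \<in> T \<Longrightarrow> f x = 0"
  shows "ahas_sum absv f (S - T) s"
  unfolding ahas_sum_def
proof (intro allI impI)
  fix e :: real
  assume "e > 0"
  then obtain F0 where F0: "finite F0" "F0 \<subseteq> S"
    "\<And>F. finite F \<Longrightarrow> F0 \<subseteq> F \<Longrightarrow> F \<subseteq> S \<Longrightarrow> absv (sum f F - s) < e"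
    using assms(1) unfolding ahas_sum_def by meson
  show "\<exists>F0. finite F0 \<and> F0 \<subseteq> S - T \<and>
      (\<forall>F. finite F \<and> F0 \<subseteq> F \<and> F \<subseteq> S - T \<longrightarrow> absv (sum f F - s) < e)"
  proof (intro exI[of _ "F0 - T"] conjI allI impI)
    fix F
    assume F: "finite F \<and> F0 - T \<subseteq> F \<and> F \<subseteq> S - T"
    have "sum f (F \<union> (F0 \<inter> T)) = sum f F"
      using F F0(1) assms(2) by (intro sum.mono_neutral_right) auto
    moreover have "absv (sum f (F \<union> (F0 \<inter> T)) - s) < e"
      using F F0(1,2) by (intro F0(3)) auto
    ultimately show "absv (sum f F - s) < e"
      by simp
  qed (use F0(1,2) in auto)
qed

lemma absv_sum_over_fibres_less:
  assumes G: "finite G" and H: "\<And>k. finite (H k)" "\<And>k. H k \<subseteq> {x. key x = k}"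
    and total: "absv (sum f (\<Union>k\<in>G. H k) - L) < e"
    and fibres: "\<And>k. absv (sum f (H k) - s k) < e"
  shows "absv (sum s G - L) < e"
proof -
  have "H i \<inter> H j = {}" if "i \<noteq> j" for i j
    using H(2)[of i] H(2)[of j] that by blast
  then have "sum f (\<Union>k\<in>G. H k) = (\<Sum>k\<in>G. sum f (H k))"
    using G H(1) by (intro sum.UNION_disjoint) auto
  then have eq: "sum s G - L = (\<Sum>k\<in>G. s k - sum f (H k)) + (sum f (\<Union>k\<in>G. H k) - L)"
    by (simp add: sum_subtractf)
  have "e > 0"
    using fibres[of undefined] absv_nonneg by (rule le_less_trans[rotated])
  then have "absv (\<Sum>k\<in>G. s k - sum f (H k)) < e"
    using G fibres absv_minus_commute by (intro absv_sum_less) auto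
  with total show ?thesis
    unfolding eq by (simp add: le_less_trans[OF absv_add_le_max])
qed

lemma ahas_sum_fibres:
  assumes A: "ahas_sum absv f S L" and P: "\<And>k. ahas_sum absv f {x\<in>S. key x = k} (s k)"
  shows "ahas_sum absv s UNIV L"
  unfolding ahas_sum_def
proof (intro allI impI)
  fix e :: real
  assume e: "e > 0"
  obtain F0 where F0: "finite F0" "F0 \<subseteq> S"
    "\<And>F. finite F \<Longrightarrow> F0 \<subseteq> F \<Longrightarrow> F \<subseteq> S \<Longrightarrow> absv (sum f F - L) < e"
    using A e unfolding ahas_sum_def by meson
  have "\<forall>k. \<exists>Fk. finite Fk \<and> Fk \<subseteq> {x\<in>S. key x = k} \<and>
      (\<forall>F. finite F \<and> Fk \<subseteq> F \<and> F \<subseteq> {x\<in>S. key x = k} \<longrightarrow> absv (sum f F - s k) < e)"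
    using P e unfolding ahas_sum_def by meson
  from this[unfolded choice_iff] obtain Fk where Fk: "\<forall>k. finite (Fk k) \<and> Fk k \<subseteq> {x\<in>S. key x = k} \<and>
      (\<forall>F. finite F \<and> Fk k \<subseteq> F \<and> F \<subseteq> {x\<in>S. key x = k} \<longrightarrow> absv (sum f F - s k) < e)" ..
  define H where "H k = Fk k \<union> {x\<in>F0. key x = k}" for k
  have H: "finite (H k)" "H k \<subseteq> {x\<in>S. key x = k}" "Fk k \<subseteq> H k" for k
    using Fk F0(1,2) by (auto simp: H_def)
  have "absv (sum s G - L) < e" if G: "finite G" "key ` F0 \<subseteq> G" for G
  proof (rule absv_sum_over_fibres_less[OF G(1)])
    show "finite (H k)" "H k \<subseteq> {x. key x = k}" "absv (sum f (H k) - s k) < e" for k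
      using Fk H[of k] by blast+
    have "F0 \<subseteq> (\<Union>k\<in>G. H k)"
      using G by (auto simp: H_def)
    then show "absv (sum f (\<Union>k\<in>G. H k) - L) < e"
      using G H(1) H(2) by (intro F0(3)) fastforce+
  qed
  then show "\<exists>G0. finite G0 \<and> G0 \<subseteq> UNIV \<and>
      (\<forall>G. finite G \<and> G0 \<subseteq> G \<and> G \<subseteq> UNIV \<longrightarrow> absv (sum s G - L) < e)"
    using F0(1) by (intro exI[of _ "key ` F0"]) auto
qed

end

section \<open>Finite and discrete additive subgroups\<close>

definition vanishing_poly :: "'a::comm_ring_1 set \<Rightarrow> 'a poly" where
  "vanishing_poly V = (\<Prod>l\<in>V. [:l, -1:])"

lemma poly_vanishing_poly: "poly (vanishing_poly V) x = (\<Prod>l\<in>V. l - x)"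
  by (simp add: vanishing_poly_def poly_prod)

lemma poly_pderiv_vanishing_poly:
  "poly (pderiv (vanishing_poly V)) x = - (\<Sum>a\<in>V. \<Prod>l\<in>V - {a}. l - x)"
proof -
  have "pderiv [:a, -1:] = [:-1:]" for a :: 'a
    by (simp add: pderiv_pCons)
  then show ?thesis
    by (simp add: vanishing_poly_def pderiv_prod poly_sum poly_prod sum_negf)
qed

lemma sum_inverse_diff_eq_pderiv_div:
  fixes V :: "'a::field set"
  assumes "finite V" "x \<notin> V"
  shows "(\<Sum>l\<in>V. 1 / (x - l)) = poly (pderiv (vanishing_poly V)) x / poly (vanishing_poly V) x"
proof -
  have nz: "a - x \<noteq> 0" if "a \<in> V" for a
    using assms(2) that by auto
  have Q: "poly (vanishing_poly V) x \<noteq> 0"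
    using assms nz by (simp add: poly_vanishing_poly)
  have "(\<Prod>l\<in>V - {a}. l - x) = poly (vanishing_poly V) x / (a - x)" if "a \<in> V" for a
    using prod.remove[OF assms(1) that, of "\<lambda>l. l - x"] nz[OF that]
    by (simp add: poly_vanishing_poly)
  then have "poly (pderiv (vanishing_poly V)) x = poly (vanishing_poly V) x * (\<Sum>l\<in>V. 1 / (x - l))"
    unfolding poly_pderiv_vanishing_poly sum_distrib_left sum_negf[symmetric]
    by (intro sum.cong) (auto simp: minus_divide_right)
  then show ?thesis
    using Q by simp
qed

text \<open>At each \<open>\<mu> \<in> V\<close> only one summand of the derivative survives, and translation by \<open>\<mu>\<close>
  turns it into the product of the nonzero elements of \<open>V\<close>; a polynomial of degree less than
  \<open>card V\<close> is determined by its values on \<open>V\<close>.\<close>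

lemma pderiv_vanishing_poly_subgroup:
  fixes V :: "'a::field set"
  assumes V: "finite V" "0 \<in> V" "\<And>a b. a \<in> V \<Longrightarrow> b \<in> V \<Longrightarrow> a - b \<in> V"
  shows "pderiv (vanishing_poly V) = [:- (\<Prod>l\<in>V - {0}. l):]"
proof (rule poly_eqI_degree[of V])
  fix \<mu>
  assume \<mu>: "\<mu> \<in> V"
  have "(\<Sum>a\<in>V - {\<mu>}. \<Prod>l\<in>V - {a}. l - \<mu>) = 0"
    using V(1) \<mu> by (intro sum.neutral ballI) (auto simp: prod_zero_iff)
  then have "(\<Sum>a\<in>V. \<Prod>l\<in>V - {a}. l - \<mu>) = (\<Prod>l\<in>V - {\<mu>}. l - \<mu>)"
    using sum.remove[OF V(1) \<mu>, of "\<lambda>a. \<Prod>l\<in>V - {a}. l - \<mu>"] by simp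
  also have "\<dots> = (\<Prod>l\<in>V - {0}. l)"
  proof (rule prod.reindex_bij_witness[of _ "\<lambda>c. c + \<mu>" "\<lambda>l. l - \<mu>"])
    show "c + \<mu> \<in> V - {\<mu>}" if "c \<in> V - {0}" for c
      using V(3)[of c "0 - \<mu>"] V(3)[OF V(2) \<mu>] that by auto
  qed (use V(3) \<mu> in auto)
  finally show "poly (pderiv (vanishing_poly V)) \<mu> = poly [:- (\<Prod>l\<in>V - {0}. l):] \<mu>"
    by (simp add: poly_pderiv_vanishing_poly)
next
  have "card V > 0"
    using V(1,2) by (auto simp: card_gt_0_iff)
  moreover have "degree (pderiv (vanishing_poly V)) \<le> degree (vanishing_poly V) - 1"
    by (rule degree_le) (auto simp: coeff_pderiv coeff_eq_0)
  moreover have "degree (vanishing_poly V) = card V"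
    by (simp add: vanishing_poly_def degree_prod_eq_sum_degree)
  ultimately show "degree (pderiv (vanishing_poly V)) < card V" "degree [:- (\<Prod>l\<in>V - {0}. l):] < card V"
    by simp_all
qed

lemma subgroup_exp_mult_sum_inverse:
  fixes V :: "'a::field set"
  assumes V: "finite V" "0 \<in> V" "\<And>a b. a \<in> V \<Longrightarrow> b \<in> V \<Longrightarrow> a - b \<in> V" and x: "x \<notin> V"
  shows "x * (\<Prod>l\<in>V - {0}. 1 - x / l) * (\<Sum>l\<in>V. 1 / (x - l)) = 1"
proof -
  define K where "K = (\<Prod>l\<in>V - {0}. l)"
  define Qx where "Qx = poly (vanishing_poly V) x"
  have K: "K \<noteq> 0"
    using V(1) by (simp add: K_def)
  have Qx: "Qx \<noteq> 0"
    using V(1) x by (auto simp: Qx_def poly_vanishing_poly)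
  have "(\<Sum>l\<in>V. 1 / (x - l)) = - K / Qx"
    using sum_inverse_diff_eq_pderiv_div[OF V(1) x] pderiv_vanishing_poly_subgroup[OF V]
    by (simp add: K_def Qx_def)
  moreover have "x * (\<Prod>l\<in>V - {0}. 1 - x / l) = - Qx / K"
  proof -
    have "(\<Prod>l\<in>V - {0}. 1 - x / l) = (\<Prod>l\<in>V - {0}. (l - x) / l)"
      by (intro prod.cong) (auto simp: field_simps)
    also have "\<dots> = (\<Prod>l\<in>V - {0}. l - x) / K"
      by (simp add: K_def prod_dividef)
    moreover have "Qx = - x * (\<Prod>l\<in>V - {0}. l - x)"
      using prod.remove[OF V(1,2), of "\<lambda>l. l - x"] by (simp add: Qx_def poly_vanishing_poly)
    ultimately show ?thesis
      using K by (simp add: field_simps)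
  qed
  ultimately show ?thesis
    using K Qx by simp
qed

context nonarch_abs
begin

definition discrete_subgroup :: "'a set \<Rightarrow> bool" where
  "discrete_subgroup \<Lambda> \<longleftrightarrow> 0 \<in> \<Lambda> \<and> (\<forall>a\<in>\<Lambda>. \<forall>b\<in>\<Lambda>. a - b \<in> \<Lambda>) \<and> (\<forall>R. finite {l\<in>\<Lambda>. absv l \<le> R})"

lemma filterlim_balls_finite_subsets_at_top:
  assumes "\<And>R. finite {l\<in>\<Lambda>. absv l \<le> R}"
  shows "filterlim (\<lambda>n. {l\<in>\<Lambda>. absv l \<le> real n} - Z) (finite_subsets_at_top (\<Lambda> - Z)) sequentially"
  unfolding filterlim_finite_subsets_at_top
proof (intro allI impI)
  fix X
  assume X: "finite X \<and> X \<subseteq> \<Lambda> - Z"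
  have "eventually (\<lambda>n. absv l \<le> real n) sequentially" for l
    using eventually_ge_at_top[of "nat \<lceil>absv l\<rceil>"] by eventually_elim linarith
  then have "eventually (\<lambda>n. \<forall>l\<in>X. absv l \<le> real n) sequentially"
    using X by (simp add: eventually_ball_finite)
  then show "eventually (\<lambda>n. finite ({l\<in>\<Lambda>. absv l \<le> real n} - Z) \<and>
      X \<subseteq> {l\<in>\<Lambda>. absv l \<le> real n} - Z \<and> {l\<in>\<Lambda>. absv l \<le> real n} - Z \<subseteq> \<Lambda> - Z) sequentially"
    by eventually_elim (use X assms in auto)
qed

lemma discrete_subgroup_ball_identity:
  assumes \<Lambda>: "discrete_subgroup \<Lambda>" and x: "x \<notin> \<Lambda>" and R: "R \<ge> 0"
  defines "V \<equiv> {l\<in>\<Lambda>. absv l \<le> R}"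
  shows "x * (\<Prod>l\<in>V - {0}. 1 - x / l) * (\<Sum>l\<in>V. 1 / (x - l)) = 1"
proof (rule subgroup_exp_mult_sum_inverse)
  show "finite V" "0 \<in> V"
    using \<Lambda> R by (simp_all add: V_def discrete_subgroup_def)
  show "a - b \<in> V" if "a \<in> V" "b \<in> V" for a b
    using \<Lambda> that absv_diff_le_max[of a b] by (auto simp: V_def discrete_subgroup_def)
  show "x \<notin> V"
    using x by (simp add: V_def)
qed

end

context complete_nonarch_abs
begin

lemma discrete_subgroup_sum_inverse_exists:
  assumes "discrete_subgroup \<Lambda>" "x \<notin> \<Lambda>"
  shows "\<exists>S. ahas_sum absv (\<lambda>l. 1 / (x - l)) \<Lambda> S"
proof (rule ahas_sum_exists)
  fix e :: real
  assume e: "e > 0"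
  have "absv l \<le> max (absv x) (1 / e)" if "l \<in> \<Lambda>" "e \<le> absv (1 / (x - l))" for l
  proof -
    have "x - l \<noteq> 0"
      using assms(2) that(1) by auto
    then have "absv (x - l) \<le> 1 / e"
      using e that(2) by (simp add: absv_divide absv_pos_iff field_simps)
    then show ?thesis
      using absv_diff_le_max[of x "x - l"] by simp
  qed
  then have "{l\<in>\<Lambda>. e \<le> absv (1 / (x - l))} \<subseteq> {l\<in>\<Lambda>. absv l \<le> max (absv x) (1 / e)}"
    by blast
  then show "finite {l\<in>\<Lambda>. e \<le> absv (1 / (x - l))}"
    using assms(1) finite_subset unfolding discrete_subgroup_def by blast
qed

lemma discrete_subgroup_prod_exists:
  assumes "discrete_subgroup \<Lambda>"
  shows "\<exists>P. ahas_prod absv (\<lambda>l. 1 - x / l) (\<Lambda> - {0}) P"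
proof (rule ahas_prod_exists)
  fix e :: real
  assume e: "e > 0"
  have "absv l \<le> absv x / e" if "l \<in> \<Lambda> - {0}" "e \<le> absv (1 - x / l - 1)" for l
    using e that by (simp add: absv_divide absv_pos_iff field_simps)
  then have "{l\<in>\<Lambda> - {0}. e \<le> absv (1 - x / l - 1)} \<subseteq> {l\<in>\<Lambda>. absv l \<le> absv x / e}"
    by blast
  then show "finite {l\<in>\<Lambda> - {0}. e \<le> absv (1 - x / l - 1)}"
    using assms finite_subset unfolding discrete_subgroup_def by blast
qed

text \<open>The partial sums and products over the balls of radius \<open>n\<close> are finite subgroups, for which
  the identity \<open>exp_V(x) \<cdot> \<Sum>l\<in>V. 1/(x - l) = 1\<close> holds exactly; it passes to the limit.\<close>

lemma ahas_sum_inverse_expL: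
  assumes \<Lambda>: "discrete_subgroup \<Lambda>" and x: "x \<notin> \<Lambda>"
  shows "ahas_sum absv (\<lambda>l. 1 / (x - l)) \<Lambda> (inverse (expL absv \<Lambda> x))"
proof -
  obtain S where S: "ahas_sum absv (\<lambda>l. 1 / (x - l)) \<Lambda> S"
    using discrete_subgroup_sum_inverse_exists[OF assms] by blast
  obtain P where P: "ahas_prod absv (\<lambda>l. 1 - x / l) (\<Lambda> - {0}) P"
    using discrete_subgroup_prod_exists[OF \<Lambda>] by blast
  have "(THE P. ahas_prod absv (\<lambda>l. 1 - x / l) (\<Lambda> - {0}) P) = P"
    using P ahas_prod_unique by blast
  then have expL: "expL absv \<Lambda> x = x * P"
    by (simp add: expL_def)
  define V where "V n = {l\<in>\<Lambda>. absv l \<le> real n}" for n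
  have balls: "\<And>R. finite {l\<in>\<Lambda>. absv l \<le> R}"
    using \<Lambda> by (simp add: discrete_subgroup_def)
  have "abs_tendsto absv (\<lambda>n. x * prod (\<lambda>l. 1 - x / l) (V n - {0}) * sum (\<lambda>l. 1 / (x - l)) (V n))
      (x * P * S) sequentially"
  proof (intro abs_tendsto_mult abs_tendsto_const)
    show "abs_tendsto absv (\<lambda>n. prod (\<lambda>l. 1 - x / l) (V n - {0})) P sequentially"
      using P filterlim_balls_finite_subsets_at_top[OF balls, of "{0}"]
      unfolding ahas_prod_iff_abs_tendsto V_def by (rule abs_tendsto_compose)
    show "abs_tendsto absv (\<lambda>n. sum (\<lambda>l. 1 / (x - l)) (V n)) S sequentially"
      using S filterlim_balls_finite_subsets_at_top[OF balls, of "{}"]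
      unfolding ahas_sum_iff_abs_tendsto V_def Diff_empty by (rule abs_tendsto_compose)
  qed
  moreover have "x * prod (\<lambda>l. 1 - x / l) (V n - {0}) * sum (\<lambda>l. 1 / (x - l)) (V n) = 1" for n
    unfolding V_def using \<Lambda> x by (rule discrete_subgroup_ball_identity) simp
  ultimately have "x * P * S = 1"
    using abs_tendsto_unique[OF sequentially_bot _ abs_tendsto_const] by simp
  then have "inverse (expL absv \<Lambda> x) = S"
    unfolding expL by (rule inverse_unique)
  then show ?thesis
    using S by simp
qed

end

section \<open>The model of \<open>C_infinity\<close>\<close>

lemma finite_degree_le: "finite {p :: 'a::{zero,finite} poly. degree p \<le> N}"
proof -
  have "coeff ` {p :: 'a poly. degree p \<le> N} \<subseteq> {g. \<forall>x. (x \<in> {..N} \<longrightarrow> g x \<in> UNIV) \<and> (x \<notin> {..N} \<longrightarrow> g x = 0)}"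
    by (auto intro: coeff_eq_0)
  then have "finite (coeff ` {p :: 'a poly. degree p \<le> N})"
    by (rule finite_subset) (rule finite_set_of_finite_funs; simp)
  moreover have "inj_on coeff {p :: 'a poly. degree p \<le> N}"
    by (rule inj_onI) (simp add: poly_eq_iff)
  ultimately show ?thesis
    using finite_imageD by blast
qed

locale Cinf =
  fixes \<iota> :: "'f::{finite,field} \<Rightarrow> 'c::field" and \<theta> :: 'c and absv :: "'c \<Rightarrow> real"
  assumes model: "Cinf_model \<iota> \<theta> absv"
begin

sublocale complete_nonarch_abs absv
  using model
  unfolding Cinf_model_def complete_nonarch_abs_def nonarch_abs_def complete_nonarch_abs_axioms_def
  by blast

lemma iota_0 [simp]: "\<iota> 0 = 0" and iota_1 [simp]: "\<iota> 1 = 1" and iota_add: "\<iota> (x + y) = \<iota> x + \<iota> y"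
  and iota_mult: "\<iota> (x * y) = \<iota> x * \<iota> y" and absv_theta: "absv \<theta> = real CARD('f)"
  using model unfolding Cinf_model_def by auto

lemma CARD_ge_2: "CARD('f) \<ge> 2"
proof -
  have "card {0::'f, 1} \<le> CARD('f)"
    by (rule card_mono) auto
  then show ?thesis
    by simp
qed

lemma CARD_gt_1: "real CARD('f) > 1"
  using CARD_ge_2 by simp

text \<open>Every nonzero element of the finite field \<open>F_q\<close> is a root of unity.\<close>

lemma absv_iota:
  assumes "x \<noteq> 0"
  shows "absv (\<iota> x) = 1"
proof -
  have "\<not> inj (\<lambda>n::nat. x ^ n)"
  proof
    assume "inj (\<lambda>n::nat. x ^ n)"
    then have "finite (UNIV :: nat set)"
      using inj_on_finite[of "\<lambda>n::nat. x ^ n" UNIV UNIV] by simp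
    then show False
      by simp
  qed
  then obtain m n :: nat where mn: "m < n" "x ^ m = x ^ n"
    unfolding inj_def by (metis linorder_neqE_nat)
  have "x ^ m * x ^ (n - m) = x ^ n"
    using mn(1) by (simp flip: power_add)
  then have "x ^ (n - m) = 1"
    using mn(2) assms by simp
  moreover have "\<iota> (x ^ k) = \<iota> x ^ k" for k
    by (induction k) (simp_all add: iota_mult)
  ultimately have "absv (\<iota> x) ^ (n - m) = 1"
    by (metis absv_1 absv_power iota_1)
  then show ?thesis
    using mn(1) absv_nonneg[of "\<iota> x"] power_eq_1_iff[of "absv (\<iota> x)" "n - m"] by simp
qed

lemma absv_iota_le_1: "absv (\<iota> x) \<le> 1"
  by (cases "x = 0") (simp_all add: absv_iota)

lemma evalA_pCons: "evalA \<iota> (pCons c p) x = \<iota> c + x * evalA \<iota> p x"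
  unfolding evalA_def by (simp add: map_poly_pCons)

lemma evalA_0 [simp]: "evalA \<iota> 0 x = 0"
  by (simp add: evalA_def)

lemma evalA_1 [simp]: "evalA \<iota> 1 x = 1"
  by (simp add: evalA_def)

lemma evalA_add: "evalA \<iota> (p + q) x = evalA \<iota> p x + evalA \<iota> q x"
proof -
  have "map_poly \<iota> (p + q) = map_poly \<iota> p + map_poly \<iota> q"
    by (intro poly_eqI) (simp add: coeff_map_poly iota_add)
  then show ?thesis
    by (simp add: evalA_def)
qed

lemma evalA_minus: "evalA \<iota> (- p) x = - evalA \<iota> p x"
  using evalA_add[of "- p" p x] by (simp add: eq_neg_iff_add_eq_0)

lemma evalA_diff: "evalA \<iota> (p - q) x = evalA \<iota> p x - evalA \<iota> q x"
  using evalA_add[of p "- q" x] evalA_minus[of q x] by simp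

lemma evalA_smult: "evalA \<iota> (smult c q) x = \<iota> c * evalA \<iota> q x"
proof -
  have "map_poly \<iota> (smult c q) = smult (\<iota> c) (map_poly \<iota> q)"
    by (rule map_poly_smult) (simp_all add: iota_mult)
  then show ?thesis
    by (simp add: evalA_def)
qed

lemma evalA_mult: "evalA \<iota> (p * q) x = evalA \<iota> p x * evalA \<iota> q x"
proof (induction p rule: pCons_induct)
  case (pCons a p)
  have "pCons a p * q = smult a q + pCons 0 (p * q)"
    by (simp add: mult_pCons_left)
  then show ?case
    using pCons.IH by (simp add: evalA_add evalA_smult evalA_pCons algebra_simps)
qed simp

text \<open>Since \<open>|\<theta>| = q > 1 \<ge> |\<iota> c|\<close>, the leading term dominates: \<open>|a(\<theta>)| = q ^ deg a\<close>.\<close>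

lemma absv_evalA_theta: "p \<noteq> 0 \<Longrightarrow> absv (evalA \<iota> p \<theta>) = real CARD('f) ^ degree p"
proof (induction p rule: pCons_induct)
  case (pCons c p)
  show ?case
  proof (cases "p = 0")
    case True
    then show ?thesis
      using pCons.prems by (simp add: evalA_pCons absv_iota)
  next
    case False
    have "absv (\<theta> * evalA \<iota> p \<theta>) = real CARD('f) ^ Suc (degree p)"
      using pCons.IH[OF False] by (simp add: absv_mult absv_theta)
    moreover have "real CARD('f) ^ Suc (degree p) > 1"
      using CARD_gt_1 by (intro one_less_power) simp_all
    ultimately have "absv (\<theta> * evalA \<iota> p \<theta> + \<iota> c) = absv (\<theta> * evalA \<iota> p \<theta>)"
      using absv_iota_le_1[of c] by (intro absv_add_eq_left) linarith
    then show ?thesis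
      using pCons.IH[OF False] False by (simp add: evalA_pCons add.commute absv_mult absv_theta)
  qed
qed simp

lemma evalA_theta_nonzero: "p \<noteq> 0 \<Longrightarrow> evalA \<iota> p \<theta> \<noteq> 0"
  using absv_evalA_theta[of p] CARD_gt_1 by fastforce

lemma degree_le_absv_evalA_theta:
  assumes "p \<noteq> 0"
  shows "real (degree p) \<le> absv (evalA \<iota> p \<theta>)"
proof -
  have "real (degree p) \<le> 2 ^ degree p"
    using less_exp[of "degree p"] by (metis less_imp_le of_nat_le_iff of_nat_numeral of_nat_power)
  also have "(2::real) ^ degree p \<le> real CARD('f) ^ degree p"
    using CARD_ge_2 by (intro power_mono) auto
  finally show ?thesis
    using absv_evalA_theta[OF assms] by simp
qed

lemma absv_evalA_le_1: "absv t \<le> 1 \<Longrightarrow> absv (evalA \<iota> p t) \<le> 1"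
proof (induction p rule: pCons_induct)
  case (pCons c p)
  have "absv (t * evalA \<iota> p t) \<le> 1"
    using pCons absv_nonneg by (simp add: absv_mult mult_le_one)
  then show ?case
    using absv_iota_le_1[of c] by (simp add: evalA_pCons order_trans[OF absv_add_le_max])
qed simp

definition K_theta :: "'c set" where
  "K_theta = {evalA \<iota> a \<theta> / evalA \<iota> b \<theta> | a b. b \<noteq> 0}"

lemma evalA_in_K_theta: "evalA \<iota> a \<theta> \<in> K_theta"
  unfolding K_theta_def by (intro CollectI exI[of _ a] exI[of _ 1]) simp

lemma K_theta_diff:
  assumes "x \<in> K_theta" "y \<in> K_theta"
  shows "x - y \<in> K_theta"
proof -
  obtain a b c d where x: "x = evalA \<iota> a \<theta> / evalA \<iota> b \<theta>" "b \<noteq> 0"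
    and y: "y = evalA \<iota> c \<theta> / evalA \<iota> d \<theta>" "d \<noteq> 0"
    using assms unfolding K_theta_def by blast
  have "evalA \<iota> b \<theta> \<noteq> 0" "evalA \<iota> d \<theta> \<noteq> 0"
    using x(2) y(2) evalA_theta_nonzero by auto
  then have "x - y = evalA \<iota> (a * d - c * b) \<theta> / evalA \<iota> (b * d) \<theta>"
    unfolding x(1) y(1) by (simp add: evalA_diff evalA_mult field_simps)
  moreover have "b * d \<noteq> 0"
    using x y by simp
  ultimately show ?thesis
    unfolding K_theta_def by blast
qed

lemma K_theta_divide:
  assumes "x \<in> K_theta" "y \<in> K_theta"
  shows "x / y \<in> K_theta"
proof -
  obtain a b c d where x: "x = evalA \<iota> a \<theta> / evalA \<iota> b \<theta>" "b \<noteq> 0"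
    and y: "y = evalA \<iota> c \<theta> / evalA \<iota> d \<theta>" "d \<noteq> 0"
    using assms unfolding K_theta_def by blast
  show ?thesis
  proof (cases "c = 0")
    case True
    then show ?thesis
      using y evalA_in_K_theta[of 0] by simp
  next
    case False
    have "evalA \<iota> b \<theta> \<noteq> 0" "evalA \<iota> c \<theta> \<noteq> 0" "evalA \<iota> d \<theta> \<noteq> 0"
      using x(2) y(2) False evalA_theta_nonzero by auto
    then have "x / y = evalA \<iota> (a * d) \<theta> / evalA \<iota> (b * c) \<theta>"
      unfolding x(1) y(1) by (simp add: evalA_mult field_simps)
    moreover have "b * c \<noteq> 0"
      using x False by simp
    ultimately show ?thesis
      unfolding K_theta_def by blast
  qed
qed

lemma Kinf_if_aseq_lim:
  assumes "\<And>n. X n \<in> K_theta" "aseq_lim absv X L"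
  shows "L \<in> Kinf \<iota> \<theta> absv"
  unfolding Kinf_def
proof (intro CollectI allI impI)
  fix e :: real
  assume "e > 0"
  then obtain N where "absv (X N - L) < e"
    using assms(2) unfolding aseq_lim_def by blast
  moreover obtain a b where "X N = evalA \<iota> a \<theta> / evalA \<iota> b \<theta>" "b \<noteq> 0"
    using assms(1)[of N] unfolding K_theta_def by blast
  ultimately show "\<exists>a b. b \<noteq> 0 \<and> absv (L - evalA \<iota> a \<theta> / evalA \<iota> b \<theta>) < e"
    using absv_minus_commute by metis
qed

lemma evalA_in_Kinf: "evalA \<iota> a \<theta> \<in> Kinf \<iota> \<theta> absv"
  using Kinf_if_aseq_lim[of "\<lambda>_. evalA \<iota> a \<theta>"] evalA_in_K_theta
  by (simp add: aseq_lim_def)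

lemma zero_in_Kinf: "0 \<in> Kinf \<iota> \<theta> absv" and one_in_Kinf: "1 \<in> Kinf \<iota> \<theta> absv"
  using evalA_in_Kinf[of 0] evalA_in_Kinf[of 1] by simp_all

lemma pitilde_factor:
  assumes "i \<ge> 1"
  defines "g \<equiv> inverse (1 - inverse (\<theta> ^ (CARD('f) ^ i - 1)))"
  shows "absv g = 1" "absv (g - 1) \<le> 1 / real (Suc i)"
proof -
  define q where "q = CARD('f)"
  define y where "y = inverse (\<theta> ^ (q ^ i - 1))"
  have "Suc i \<le> 2 ^ i"
    using less_exp[of i] by (simp only: Suc_le_eq)
  also have "(2::nat) ^ i \<le> q ^ i"
    using CARD_ge_2 by (simp add: q_def power_mono)
  finally have i_q: "Suc i \<le> q ^ i" .
  then have "q ^ i \<le> q ^ (q ^ i - 1)"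
    using CARD_ge_2 unfolding q_def by (intro power_increasing) auto
  with i_q have "real (Suc i) \<le> real q ^ (q ^ i - 1)"
    by (metis le_trans of_nat_le_iff of_nat_power)
  then have "inverse (real q ^ (q ^ i - 1)) \<le> inverse (real (Suc i))"
    by (rule le_imp_inverse_le) simp
  moreover have "absv y = inverse (real q ^ (q ^ i - 1))"
    by (simp add: y_def absv_inverse absv_power absv_theta q_def)
  ultimately have y: "absv y \<le> 1 / real (Suc i)"
    by (simp add: inverse_eq_divide)
  also have "1 / real (Suc i) < 1"
    using assms(1) by simp
  finally have "absv (1 - y) = 1"
    using absv_add_eq_left[of "- y" 1] by simp
  moreover have "g = inverse (1 - y)"
    by (simp add: g_def y_def q_def)
  moreover have "1 - y \<noteq> 0"
    using \<open>absv (1 - y) = 1\<close> by auto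
  ultimately have "absv g = 1" "g - 1 = y / (1 - y)"
    by (simp add: absv_inverse, simp add: field_simps)
  then show "absv g = 1" "absv (g - 1) \<le> 1 / real (Suc i)"
    using y \<open>absv (1 - y) = 1\<close> by (simp_all add: absv_divide)
qed

lemma pitilde_nonzero:
  assumes "\<zeta> ^ (CARD('f) - 1) = - \<theta>"
  shows "pitilde \<iota> \<theta> absv \<zeta> \<noteq> 0"
proof -
  obtain L where L: "aseq_lim absv (\<lambda>n. \<Prod>i=1..n. inverse (1 - inverse (\<theta> ^ (CARD('f) ^ i - 1)))) L"
    and "absv L = 1"
    using aseq_lim_prod_absv_1[OF pitilde_factor] by blast
  then have "L \<noteq> 0"
    by auto
  moreover have "(THE L. aseq_lim absv (\<lambda>n. \<Prod>i=1..n. inverse (1 - inverse (\<theta> ^ (CARD('f) ^ i - 1)))) L) = L"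
    using L aseq_lim_unique by blast
  moreover have "\<theta> \<noteq> 0"
    using absv_theta CARD_gt_1 by auto
  moreover have "\<zeta> \<noteq> 0"
    using assms \<open>\<theta> \<noteq> 0\<close> CARD_ge_2 by (auto simp: zero_power)
  ultimately show ?thesis
    by (simp add: pitilde_def)
qed

end

section \<open>Equivalence of norms\<close>

context nonarch_abs
begin

lemma absv_last_coeff_le:
  assumes I: "finite I" "k \<notin> I"
    and K_divide: "\<And>x y. x \<in> K \<Longrightarrow> y \<in> K \<Longrightarrow> x / y \<in> K"
    and D: "\<And>d. \<forall>i\<in>I. d i \<in> K \<Longrightarrow> D \<le> absv (w k + (\<Sum>i\<in>I. d i * w i))"
    and c: "\<forall>i\<in>insert k I. c i \<in> K"
  shows "D * absv (c k) \<le> absv (\<Sum>i\<in>insert k I. c i * w i)"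
proof (cases "c k = 0")
  case True
  then show ?thesis
    by (simp add: absv_nonneg)
next
  case False
  have "\<forall>i\<in>I. c i / c k \<in> K"
    using c K_divide by auto
  then have "D * absv (c k) \<le> absv (w k + (\<Sum>i\<in>I. c i / c k * w i)) * absv (c k)"
    using D[of "\<lambda>i. c i / c k"] absv_nonneg by (intro mult_right_mono) auto
  also have "\<dots> = absv (\<Sum>i\<in>insert k I. c i * w i)"
    using False I by (simp add: distrib_left sum_distrib_left absv_mult[symmetric] algebra_simps)
  finally show ?thesis .
qed

lemma absv_other_coeff_le:
  assumes I: "finite I" "k \<notin> I"
    and K_divide: "\<And>x y. x \<in> K \<Longrightarrow> y \<in> K \<Longrightarrow> x / y \<in> K"
    and C: "\<And>c j. \<forall>i\<in>I. c i \<in> K \<Longrightarrow> j \<in> I \<Longrightarrow> C * absv (c j) \<le> absv (\<Sum>i\<in>I. c i * w i)"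
    and D: "D > 0" "\<And>d. \<forall>i\<in>I. d i \<in> K \<Longrightarrow> D \<le> absv (w k + (\<Sum>i\<in>I. d i * w i))"
    and c: "\<forall>i\<in>insert k I. c i \<in> K" and j: "j \<in> I"
  shows "C * absv (c j) \<le> max 1 (absv (w k) / D) * absv (\<Sum>i\<in>insert k I. c i * w i)"
proof -
  define N where "N = absv (\<Sum>i\<in>insert k I. c i * w i)"
  define M where "M = max 1 (absv (w k) / D)"
  have "M \<ge> 1" "absv (w k) / D \<le> M"
    by (simp_all add: M_def)
  then have M: "M \<ge> 1" "absv (w k) \<le> D * M"
    using D(1) by (simp_all add: pos_divide_le_eq mult.commute)
  have ck: "D * absv (c k) \<le> N"
    unfolding N_def using I K_divide D(2) c by (rule absv_last_coeff_le)
  have "absv (c k) * absv (w k) \<le> absv (c k) * (D * M)"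
    using M(2) absv_nonneg by (rule mult_left_mono)
  also have "\<dots> = (D * absv (c k)) * M"
    by (simp add: mult_ac)
  also have "\<dots> \<le> N * M"
    using ck M(1) by (intro mult_right_mono) auto
  finally have "absv (c k) * absv (w k) \<le> N * M" .
  moreover have "N \<le> N * M"
    using mult_left_mono[OF M(1), of N] absv_nonneg by (simp add: N_def)
  moreover have "C * absv (c j) \<le> absv ((\<Sum>i\<in>insert k I. c i * w i) - c k * w k)"
    using C[of c j] c j I by simp
  moreover have "\<dots> \<le> max N (absv (c k) * absv (w k))"
    unfolding N_def absv_mult[symmetric] by (rule absv_diff_le_max)
  ultimately show ?thesis
    by (simp add: N_def M_def mult.commute)
qed

text \<open>The inductive step of the equivalence of norms: the bound \<open>D\<close> on the distance of \<open>w k\<close> from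
  the \<open>K\<close>-span of the other vectors controls the new coefficient, and then the old ones.\<close>

lemma coeff_bound_insert:
  assumes I: "finite I" "k \<notin> I"
    and K_divide: "\<And>x y. x \<in> K \<Longrightarrow> y \<in> K \<Longrightarrow> x / y \<in> K"
    and C: "C > 0" "\<And>c j. \<forall>i\<in>I. c i \<in> K \<Longrightarrow> j \<in> I \<Longrightarrow> C * absv (c j) \<le> absv (\<Sum>i\<in>I. c i * w i)"
    and D: "D > 0" "\<And>d. \<forall>i\<in>I. d i \<in> K \<Longrightarrow> D \<le> absv (w k + (\<Sum>i\<in>I. d i * w i))"
  shows "\<exists>C'>0. \<forall>c. (\<forall>i\<in>insert k I. c i \<in> K) \<longrightarrow>
           (\<forall>j\<in>insert k I. C' * absv (c j) \<le> absv (\<Sum>i\<in>insert k I. c i * w i))"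
proof -
  define M where "M = max 1 (absv (w k) / D)"
  have M: "M \<ge> 1"
    by (simp add: M_def)
  have "min D (C / M) * absv (c j) \<le> absv (\<Sum>i\<in>insert k I. c i * w i)"
    if c: "\<forall>i\<in>insert k I. c i \<in> K" and j: "j \<in> insert k I" for c j
  proof (cases "j = k")
    case True
    have "min D (C / M) * absv (c k) \<le> D * absv (c k)"
      using absv_nonneg by (intro mult_right_mono) auto
    also have "\<dots> \<le> absv (\<Sum>i\<in>insert k I. c i * w i)"
      using I K_divide D(2) c by (rule absv_last_coeff_le)
    finally show ?thesis
      using True by simp
  next
    case False
    then have "C * absv (c j) \<le> M * absv (\<Sum>i\<in>insert k I. c i * w i)"
      unfolding M_def using I K_divide C(2) D c j by (intro absv_other_coeff_le) auto
    then have "C / M * absv (c j) \<le> absv (\<Sum>i\<in>insert k I. c i * w i)"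
      using M by (simp add: field_simps)
    moreover have "min D (C / M) * absv (c j) \<le> C / M * absv (c j)"
      using absv_nonneg by (intro mult_right_mono) auto
    ultimately show ?thesis
      by simp
  qed
  then show ?thesis
    using C(1) D(1) M by (intro exI[of _ "min D (C / M)"]) auto
qed

end

context Cinf
begin

definition Kinf_independent :: "'i set \<Rightarrow> ('i \<Rightarrow> 'c) \<Rightarrow> bool" where
  "Kinf_independent I w \<longleftrightarrow>
     (\<forall>c. (\<forall>i\<in>I. c i \<in> Kinf \<iota> \<theta> absv) \<longrightarrow> (\<Sum>i\<in>I. c i * w i) = 0 \<longrightarrow> (\<forall>i\<in>I. c i = 0))"

lemma Kinf_independent_subset:
  assumes "Kinf_independent I w" "J \<subseteq> I" "finite I"
  shows "Kinf_independent J w"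
  unfolding Kinf_independent_def
proof (intro allI impI)
  fix c
  assume c: "\<forall>i\<in>J. c i \<in> Kinf \<iota> \<theta> absv" "(\<Sum>i\<in>J. c i * w i) = 0"
  define c' where "c' i = (if i \<in> J then c i else 0)" for i
  have "(\<Sum>i\<in>I. c' i * w i) = (\<Sum>i\<in>I. if i \<in> J then c i * w i else 0)"
    by (intro sum.cong) (auto simp: c'_def)
  also have "\<dots> = (\<Sum>i\<in>J. c i * w i)"
    using assms(2,3) by (simp add: sum.inter_restrict[symmetric] Int_absorb1)
  finally have "(\<Sum>i\<in>I. c' i * w i) = 0"
    using c(2) by simp
  moreover have "\<forall>i\<in>I. c' i \<in> Kinf \<iota> \<theta> absv"
    using c(1) zero_in_Kinf by (simp add: c'_def)
  ultimately have "\<forall>i\<in>I. c' i = 0"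
    using assms(1) unfolding Kinf_independent_def by blast
  then show "\<forall>i\<in>J. c i = 0"
    using assms(2) unfolding c'_def by (metis subsetD)
qed

lemma Kinf_independent_insert_nonzero:
  assumes "finite I" "k \<notin> I" "Kinf_independent (insert k I) w" "\<forall>i\<in>I. \<delta> i \<in> Kinf \<iota> \<theta> absv"
  shows "w k + (\<Sum>i\<in>I. \<delta> i * w i) \<noteq> 0"
proof
  assume zero: "w k + (\<Sum>i\<in>I. \<delta> i * w i) = 0"
  define c where "c = \<delta>(k := 1)"
  have "(\<Sum>i\<in>insert k I. c i * w i) = c k * w k + (\<Sum>i\<in>I. c i * w i)"
    by (rule sum.insert[OF assms(1,2)])
  also have "(\<Sum>i\<in>I. c i * w i) = (\<Sum>i\<in>I. \<delta> i * w i)"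
    using assms(2) by (intro sum.cong) (auto simp: c_def)
  also have "c k = 1"
    by (simp add: c_def)
  finally have "(\<Sum>i\<in>insert k I. c i * w i) = 0"
    using zero by (simp only: mult_1_left)
  moreover have "c i \<in> Kinf \<iota> \<theta> absv" if "i \<in> insert k I" for i
    using assms(4) one_in_Kinf that unfolding c_def by (cases "i = k") auto
  ultimately have "c k = 0"
    using spec[OF assms(3)[unfolded Kinf_independent_def], of c] by blast
  then show False
    by (simp add: c_def)
qed

lemma coefficients_converge:
  assumes C: "C > 0" "\<And>c j. \<forall>i\<in>I. c i \<in> K_theta \<Longrightarrow> j \<in> I \<Longrightarrow> C * absv (c j) \<le> absv (\<Sum>i\<in>I. c i * w i)"
    and d: "\<And>n. \<forall>i\<in>I. d n i \<in> K_theta" "\<And>n. absv (v + (\<Sum>i\<in>I. d n i * w i)) < 1 / real (Suc n)"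
  shows "\<exists>\<delta>. \<forall>j\<in>I. aseq_lim absv (\<lambda>n. d n j) (\<delta> j)"
proof -
  define y where "y n = v + (\<Sum>i\<in>I. d n i * w i)" for n
  have rate: "absv (d m j - d n j) \<le> (1 / C) / real (Suc n)" if "n \<le> m" "j \<in> I" for m n j
  proof -
    have "\<forall>i\<in>I. d m i - d n i \<in> K_theta"
      using d(1) K_theta_diff by blast
    then have "C * absv (d m j - d n j) \<le> absv (\<Sum>i\<in>I. (d m i - d n i) * w i)"
      using C(2)[of "\<lambda>i. d m i - d n i" j] that(2) by blast
    also have "(\<Sum>i\<in>I. (d m i - d n i) * w i) = y m - y n"
      by (simp add: y_def algebra_simps sum_subtractf)
    also have "absv \<dots> \<le> max (absv (y m)) (absv (y n))"
      by (rule absv_diff_le_max)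
    also have "\<dots> \<le> 1 / real (Suc n)"
      using d(2)[of m] d(2)[of n] that(1) frac_le[of 1 1 "real (Suc n)" "real (Suc m)"]
      by (simp add: y_def)
    finally have "absv (d m j - d n j) \<le> (1 / real (Suc n)) / C"
      using C(1) by (simp add: pos_le_divide_eq mult_ac)
    then show ?thesis
      by (simp add: mult.commute)
  qed
  have "\<exists>L. aseq_lim absv (\<lambda>n. d n j) L" if "j \<in> I" for j
    using rate[OF _ that] by (rule aseq_lim_exists_if_rate)
  then have "\<forall>j\<in>I. \<exists>L. aseq_lim absv (\<lambda>n. d n j) L"
    by blast
  then show ?thesis
    by (rule bchoice)
qed

text \<open>If \<open>w k\<close> came arbitrarily close to the \<open>K\<close>-span of the \<open>w i\<close>, \<open>i \<in> I\<close>, the coefficients of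
  the approximations would converge (by the bound \<open>C\<close>) to a \<open>K_infinity\<close>-linear relation.\<close>

lemma Kinf_independent_insert_bounded_below:
  assumes I: "finite I" "k \<notin> I" and indep: "Kinf_independent (insert k I) w"
    and C: "C > 0" "\<And>c j. \<forall>i\<in>I. c i \<in> K_theta \<Longrightarrow> j \<in> I \<Longrightarrow> C * absv (c j) \<le> absv (\<Sum>i\<in>I. c i * w i)"
  shows "\<exists>D>0. \<forall>d. (\<forall>i\<in>I. d i \<in> K_theta) \<longrightarrow> D \<le> absv (w k + (\<Sum>i\<in>I. d i * w i))"
proof (rule ccontr)
  define y where "y d = w k + (\<Sum>i\<in>I. d i * w i)" for d
  assume "\<not> ?thesis"
  then have "\<forall>n. \<exists>d. (\<forall>i\<in>I. d i \<in> K_theta) \<and> absv (y d) < 1 / real (Suc n)"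
    by (auto simp: y_def not_le)
  from this[unfolded choice_iff] obtain d
    where d: "\<forall>n. (\<forall>i\<in>I. d n i \<in> K_theta) \<and> absv (y (d n)) < 1 / real (Suc n)" ..
  then obtain \<delta> where \<delta>: "\<forall>j\<in>I. aseq_lim absv (\<lambda>n. d n j) (\<delta> j)"
    using coefficients_converge[OF C, of d "w k"] by (auto simp: y_def)
  have "\<delta> j \<in> Kinf \<iota> \<theta> absv" if "j \<in> I" for j
    using \<delta> that d by (intro Kinf_if_aseq_lim[of "\<lambda>n. d n j"]) auto
  then have \<delta>_Kinf: "\<forall>j\<in>I. \<delta> j \<in> Kinf \<iota> \<theta> absv"
    by blast
  have "abs_tendsto absv (\<lambda>n. y (d n)) (y \<delta>) sequentially"
    unfolding y_def using I(1) \<delta>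
    by (intro abs_tendsto_add abs_tendsto_const abs_tendsto_sum abs_tendsto_mult)
      (simp_all add: aseq_lim_iff_abs_tendsto)
  moreover have "abs_tendsto absv (\<lambda>n. y (d n)) 0 sequentially"
    using LIMSEQ_inverse_real_of_nat
  proof (rule abs_tendsto_if_bound)
    show "\<forall>\<^sub>F n in sequentially. absv (y (d n) - 0) \<le> inverse (real (Suc n))"
      using d by (intro always_eventually allI) (simp add: inverse_eq_divide less_imp_le)
  qed
  ultimately have "y \<delta> = 0"
    by (rule abs_tendsto_unique[OF sequentially_bot])
  then show False
    using Kinf_independent_insert_nonzero[OF I indep \<delta>_Kinf] by (simp add: y_def)
qed

lemma Kinf_independent_coeff_bound:
  assumes "finite I" "Kinf_independent I w"
  shows "\<exists>C>0. \<forall>c. (\<forall>i\<in>I. c i \<in> K_theta) \<longrightarrow> (\<forall>j\<in>I. C * absv (c j) \<le> absv (\<Sum>i\<in>I. c i * w i))"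
  using assms
proof (induction I rule: finite_induct)
  case empty
  then show ?case
    by (intro exI[of _ 1]) simp
next
  case (insert k I)
  have "Kinf_independent I w"
    by (rule Kinf_independent_subset[OF insert.prems]) (use insert.hyps(1) in auto)
  then obtain C where C: "C > 0"
    "\<And>c j. \<forall>i\<in>I. c i \<in> K_theta \<Longrightarrow> j \<in> I \<Longrightarrow> C * absv (c j) \<le> absv (\<Sum>i\<in>I. c i * w i)"
    using insert.IH by blast
  then obtain D where D: "D > 0"
    "\<And>d. \<forall>i\<in>I. d i \<in> K_theta \<Longrightarrow> D \<le> absv (w k + (\<Sum>i\<in>I. d i * w i))"
    using Kinf_independent_insert_bounded_below[OF insert.hyps insert.prems] by blast
  show ?case
    by (rule coeff_bound_insert[OF insert.hyps K_theta_divide C D])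
qed

lemma finite_bounded_combinations:
  assumes "finite I" "Kinf_independent I w"
  shows "finite {a :: 'i \<Rightarrow> 'f poly. (\<forall>i. i \<notin> I \<longrightarrow> a i = 0) \<and>
                   absv (\<Sum>i\<in>I. evalA \<iota> (a i) \<theta> * w i) \<le> M}"
    (is "finite ?S")
proof -
  obtain C where C: "C > 0"
    "\<And>c j. \<forall>i\<in>I. c i \<in> K_theta \<Longrightarrow> j \<in> I \<Longrightarrow> C * absv (c j) \<le> absv (\<Sum>i\<in>I. c i * w i)"
    using Kinf_independent_coeff_bound[OF assms] by blast
  define N where "N = nat \<lceil>M / C\<rceil>"
  have "degree (a j) \<le> N" if a: "a \<in> ?S" and j: "j \<in> I" for a j
  proof (cases "a j = 0")
    case False
    have "C * absv (evalA \<iota> (a j) \<theta>) \<le> M"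
      using C(2)[of "\<lambda>i. evalA \<iota> (a i) \<theta>" j] evalA_in_K_theta a j by force
    then have "C * real (degree (a j)) \<le> M"
      using mult_left_mono[OF degree_le_absv_evalA_theta[OF False], of C] C(1) by linarith
    then have "real (degree (a j)) \<le> M / C"
      using C(1) by (simp add: pos_le_divide_eq mult.commute)
    then show ?thesis
      unfolding N_def by linarith
  qed simp
  then have "?S \<subseteq> {a. \<forall>x. (x \<in> I \<longrightarrow> a x \<in> {p. degree p \<le> N}) \<and> (x \<notin> I \<longrightarrow> a x = 0)}"
    by auto
  moreover have "finite {a. \<forall>x. (x \<in> I \<longrightarrow> a x \<in> {p :: 'f poly. degree p \<le> N}) \<and> (x \<notin> I \<longrightarrow> a x = 0)}"
    using assms(1) finite_degree_le by (intro finite_set_of_finite_funs)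
  ultimately show ?thesis
    by (rule finite_subset)
qed

end

section \<open>The lattice and the Eisenstein series\<close>

text \<open>The scalar \<open>p\<close> plays the role of \<open>\<pi>\<close>-tilde, of which only \<open>p \<noteq> 0\<close> is used.\<close>

locale Kinf_lattice = Cinf \<iota> \<theta> absv
  for \<iota> :: "'f::{finite,field} \<Rightarrow> 'c::field" and \<theta> absv +
  fixes p :: 'c and r :: nat and z :: "nat \<Rightarrow> 'c"
  assumes p_nonzero: "p \<noteq> 0" and r_pos: "r \<ge> 1" and z_independent: "Kinf_independent {1..r} z"
begin

definition lattice :: "'c set" where
  "lattice = {\<Sum>i=2..r. p * evalA \<iota> (a i) \<theta> * z i | a. True}"

definition coeff_vectors :: "(nat \<Rightarrow> 'f poly) set" where
  "coeff_vectors = {a. (\<forall>i. i \<notin> {1..r} \<longrightarrow> a i = 0) \<and> a \<noteq> (\<lambda>_. 0)}"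

lemma sum_split_first: "(\<Sum>i=1..r. f i) = f 1 + (\<Sum>i=2..r. f i)"
  using sum.atLeast_Suc_atMost[OF r_pos, of f] by (simp add: numeral_2_eq_2)

lemma finite_bounded_coeff_vectors:
  "finite {a :: nat \<Rightarrow> 'f poly. (\<forall>i. i \<notin> {1..r} \<longrightarrow> a i = 0) \<and>
            absv (\<Sum>i=1..r. evalA \<iota> (a i) \<theta> * z i) \<le> M}"
  using finite_bounded_combinations[OF _ z_independent] by simp

lemma finite_lattice_ball: "finite {l \<in> lattice. absv l \<le> R}"
proof -
  let ?S = "{a :: nat \<Rightarrow> 'f poly. (\<forall>i. i \<notin> {1..r} \<longrightarrow> a i = 0) \<and>
              absv (\<Sum>i=1..r. evalA \<iota> (a i) \<theta> * z i) \<le> R / absv p}"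
  have "{l \<in> lattice. absv l \<le> R} \<subseteq> (\<lambda>a. \<Sum>i=2..r. p * evalA \<iota> (a i) \<theta> * z i) ` ?S"
  proof
    fix l
    assume l: "l \<in> {l \<in> lattice. absv l \<le> R}"
    then obtain b where b: "l = (\<Sum>i=2..r. p * evalA \<iota> (b i) \<theta> * z i)"
      unfolding lattice_def by blast
    define a where "a i = (if i \<in> {2..r} then b i else 0)" for i
    have la: "l = (\<Sum>i=2..r. p * evalA \<iota> (a i) \<theta> * z i)"
      unfolding b by (intro sum.cong refl) (auto simp: a_def)
    also have "\<dots> = p * (\<Sum>i=2..r. evalA \<iota> (a i) \<theta> * z i)"
      by (simp add: sum_distrib_left mult.assoc)
    also have "\<dots> = p * (\<Sum>i=1..r. evalA \<iota> (a i) \<theta> * z i)"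
      by (subst sum_split_first) (simp add: a_def)
    finally have "absv (\<Sum>i=1..r. evalA \<iota> (a i) \<theta> * z i) \<le> R / absv p"
      using l p_nonzero by (simp add: absv_mult absv_pos_iff pos_le_divide_eq mult.commute)
    moreover have "\<forall>i. i \<notin> {1..r} \<longrightarrow> a i = 0"
      by (auto simp: a_def)
    ultimately show "l \<in> (\<lambda>a. \<Sum>i=2..r. p * evalA \<iota> (a i) \<theta> * z i) ` ?S"
      using la by blast
  qed
  then show ?thesis
    using finite_bounded_coeff_vectors finite_subset by blast
qed

lemma lattice_discrete_subgroup: "discrete_subgroup lattice"
  unfolding discrete_subgroup_def
proof (intro conjI allI ballI)
  show "0 \<in> lattice"
    unfolding lattice_def by (intro CollectI exI[of _ "\<lambda>_. 0"]) simp
next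
  fix u v
  assume "u \<in> lattice" "v \<in> lattice"
  then obtain a b where "u = (\<Sum>i=2..r. p * evalA \<iota> (a i) \<theta> * z i)" "v = (\<Sum>i=2..r. p * evalA \<iota> (b i) \<theta> * z i)"
    unfolding lattice_def by blast
  then have "u - v = (\<Sum>i=2..r. p * evalA \<iota> (a i - b i) \<theta> * z i)"
    by (simp add: sum_subtractf[symmetric] evalA_diff algebra_simps)
  then show "u - v \<in> lattice"
    unfolding lattice_def by (intro CollectI exI[of _ "\<lambda>i. a i - b i"]) simp
qed (rule finite_lattice_ball)

lemma lattice_vector_eq_0:
  assumes "p * (\<Sum>i=1..r. evalA \<iota> (a i) \<theta> * z i) = 0" "j \<in> {1..r}"
  shows "a j = 0"
proof -
  have "(\<Sum>i=1..r. evalA \<iota> (a i) \<theta> * z i) = 0"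
    using assms p_nonzero by simp
  then have "evalA \<iota> (a j) \<theta> = 0"
    using spec[OF z_independent[unfolded Kinf_independent_def], of "\<lambda>i. evalA \<iota> (a i) \<theta>"]
      evalA_in_Kinf assms(2) by blast
  then show ?thesis
    using evalA_theta_nonzero by blast
qed

lemma first_coordinate_notin_lattice:
  assumes "a1 \<noteq> 0"
  shows "p * evalA \<iota> a1 \<theta> * z 1 \<notin> lattice"
proof
  assume "p * evalA \<iota> a1 \<theta> * z 1 \<in> lattice"
  then obtain b where b: "p * evalA \<iota> a1 \<theta> * z 1 = (\<Sum>i=2..r. p * evalA \<iota> (b i) \<theta> * z i)"
    unfolding lattice_def by blast
  define a where "a i = (if i = 1 then a1 else - b i)" for i
  have "(\<Sum>i=2..r. evalA \<iota> (a i) \<theta> * z i) = (\<Sum>i=2..r. - (evalA \<iota> (b i) \<theta> * z i))"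
    by (intro sum.cong refl) (simp add: a_def evalA_minus)
  then have "p * (\<Sum>i=1..r. evalA \<iota> (a i) \<theta> * z i)
      = p * evalA \<iota> a1 \<theta> * z 1 - (\<Sum>i=2..r. p * evalA \<iota> (b i) \<theta> * z i)"
    by (subst sum_split_first) (simp add: a_def sum_negf right_diff_distrib sum_distrib_left mult.assoc)
  then have "p * (\<Sum>i=1..r. evalA \<iota> (a i) \<theta> * z i) = 0"
    using b by simp
  then have "a 1 = 0"
    using r_pos by (intro lattice_vector_eq_0) auto
  then show False
    using assms by (simp add: a_def)
qed

lemma bij_betw_fibre_lattice:
  assumes a1: "a1 \<noteq> 0"
  shows "bij_betw (\<lambda>a. \<Sum>i=2..r. p * evalA \<iota> (- a i) \<theta> * z i) {a \<in> coeff_vectors. a 1 = a1} lattice"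
    (is "bij_betw ?h ?F lattice")
proof (rule bij_betwI')
  fix a a'
  assume a: "a \<in> ?F" and a': "a' \<in> ?F"
  define c where "c i = a i - a' i" for i
  have "?h a' - ?h a = p * (\<Sum>i=1..r. evalA \<iota> (c i) \<theta> * z i)"
    using a a' by (subst sum_split_first)
      (simp add: c_def sum_distrib_left sum_subtractf[symmetric] evalA_diff evalA_minus algebra_simps)
  then have "?h a = ?h a' \<longleftrightarrow> (\<forall>i\<in>{1..r}. c i = 0)"
    using lattice_vector_eq_0[of c] by auto
  moreover have "(\<forall>i\<in>{1..r}. c i = 0) \<longleftrightarrow> a = a'"
    using a a' by (auto simp: c_def coeff_vectors_def fun_eq_iff)
  ultimately show "?h a = ?h a' \<longleftrightarrow> a = a'"
    by simp
next
  fix a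
  show "a \<in> ?F \<Longrightarrow> ?h a \<in> lattice"
    unfolding lattice_def by (intro CollectI exI[of _ "\<lambda>i. - a i"]) simp
next
  fix l
  assume "l \<in> lattice"
  then obtain b where b: "l = (\<Sum>i=2..r. p * evalA \<iota> (b i) \<theta> * z i)"
    unfolding lattice_def by blast
  define a where "a i = (if i = 1 then a1 else if i \<in> {2..r} then - b i else 0)" for i
  have "a 1 = a1"
    by (simp add: a_def)
  moreover have "a \<noteq> (\<lambda>_. 0)"
    using \<open>a 1 = a1\<close> a1 by auto
  moreover have "\<forall>i. i \<notin> {1..r} \<longrightarrow> a i = 0"
    using r_pos by (simp add: a_def)
  ultimately have "a \<in> ?F"
    by (simp add: coeff_vectors_def)
  moreover have "l = ?h a"
    unfolding b by (intro sum.cong) (auto simp: a_def)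
  ultimately show "\<exists>a\<in>?F. l = ?h a"
    by blast
qed

definition eisenstein_term :: "'c \<Rightarrow> (nat \<Rightarrow> 'f poly) \<Rightarrow> 'c" where
  "eisenstein_term t a = evalA \<iota> (a 1) t / (\<Sum>i=1..r. evalA \<iota> (a i) \<theta> * z i)"

lemma ahas_sum_fibre:
  assumes a1: "a1 \<noteq> 0"
  shows "ahas_sum absv (eisenstein_term t) {a \<in> coeff_vectors. a 1 = a1}
           (evalA \<iota> a1 t * p * inverse (expL absv lattice (p * evalA \<iota> a1 \<theta> * z 1)))"
proof -
  define x where "x = p * evalA \<iota> a1 \<theta> * z 1"
  have "ahas_sum absv (\<lambda>l. 1 / (x - l)) lattice (inverse (expL absv lattice x))"
    using lattice_discrete_subgroup first_coordinate_notin_lattice[OF a1] unfolding x_def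
    by (rule ahas_sum_inverse_expL)
  from ahas_sum_reindex_bij_betw[OF bij_betw_fibre_lattice[OF a1] this]
  have "ahas_sum absv (\<lambda>a. evalA \<iota> a1 t * p * (1 / (x - (\<Sum>i=2..r. p * evalA \<iota> (- a i) \<theta> * z i))))
          {a \<in> coeff_vectors. a 1 = a1} (evalA \<iota> a1 t * p * inverse (expL absv lattice x))"
    by (rule ahas_sum_cmult_left)
  moreover have "evalA \<iota> a1 t * p * (1 / (x - (\<Sum>i=2..r. p * evalA \<iota> (- a i) \<theta> * z i))) = eisenstein_term t a"
    if "a \<in> {a \<in> coeff_vectors. a 1 = a1}" for a
  proof -
    have "x - (\<Sum>i=2..r. p * evalA \<iota> (- a i) \<theta> * z i) = p * (\<Sum>i=1..r. evalA \<iota> (a i) \<theta> * z i)"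
      using that by (subst sum_split_first)
        (simp add: x_def distrib_left sum_distrib_left evalA_minus sum_negf algebra_simps)
    then show ?thesis
      using that p_nonzero by (simp add: eisenstein_term_def)
  qed
  ultimately show ?thesis
    unfolding x_def by (rule ahas_sum_cong[rotated])
qed

lemma eisenstein_sum_exists:
  assumes t: "absv t \<le> 1"
  shows "\<exists>L. ahas_sum absv (eisenstein_term t) coeff_vectors L"
proof (rule ahas_sum_exists)
  fix e :: real
  assume e: "e > 0"
  have "absv (\<Sum>i=1..r. evalA \<iota> (a i) \<theta> * z i) \<le> 1 / e"
    if "e \<le> absv (eisenstein_term t a)" for a
  proof -
    define D where "D = (\<Sum>i=1..r. evalA \<iota> (a i) \<theta> * z i)"
    have "e \<le> absv (evalA \<iota> (a 1) t) / absv D"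
      using that by (simp add: eisenstein_term_def D_def absv_divide)
    also have "\<dots> \<le> 1 / absv D"
      using absv_evalA_le_1[OF t] absv_nonneg by (intro divide_right_mono) auto
    finally have "e \<le> 1 / absv D" .
    moreover have "D \<noteq> 0"
      using \<open>e \<le> absv (evalA \<iota> (a 1) t) / absv D\<close> e by auto
    ultimately show ?thesis
      using e by (simp add: D_def absv_pos_iff field_simps)
  qed
  then have "{a \<in> coeff_vectors. e \<le> absv (eisenstein_term t a)}
      \<subseteq> {a. (\<forall>i. i \<notin> {1..r} \<longrightarrow> a i = 0) \<and> absv (\<Sum>i=1..r. evalA \<iota> (a i) \<theta> * z i) \<le> 1 / e}"
    by (auto simp: coeff_vectors_def)
  then show "finite {a \<in> coeff_vectors. e \<le> absv (eisenstein_term t a)}"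
    using finite_bounded_coeff_vectors finite_subset by blast
qed

theorem eisenstein_sum_expansion:
  assumes "absv t \<le> 1"
  shows "\<exists>L R. ahas_sum absv (eisenstein_term t) coeff_vectors L
    \<and> ahas_sum absv (\<lambda>a. evalA \<iota> a t * inverse (expL absv lattice (p * evalA \<iota> a \<theta> * z 1))) {a. a \<noteq> 0} R
    \<and> L = p * R"
proof -
  obtain L where L: "ahas_sum absv (eisenstein_term t) coeff_vectors L"
    using eisenstein_sum_exists[OF assms] by blast
  define s where "s a1 = evalA \<iota> a1 t * p * inverse (expL absv lattice (p * evalA \<iota> a1 \<theta> * z 1))" for a1
  have "ahas_sum absv (eisenstein_term t) {a \<in> coeff_vectors. a 1 = a1} (s a1)" for a1
  proof (cases "a1 = 0")
    case True
    then have "ahas_sum absv (eisenstein_term t) {a \<in> coeff_vectors. a 1 = a1} 0"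
      by (intro ahas_sum_0) (simp add: eisenstein_term_def)
    then show ?thesis
      using True by (simp add: s_def)
  next
    case False
    then show ?thesis
      unfolding s_def by (rule ahas_sum_fibre)
  qed
  with L have "ahas_sum absv s UNIV L"
    by (rule ahas_sum_fibres)
  then have "ahas_sum absv s {a. a \<noteq> 0} L"
    using ahas_sum_Diff[of s UNIV L "{0}"] by (simp add: s_def Compl_eq_Diff_UNIV[symmetric] Collect_neg_eq)
  then have "ahas_sum absv (\<lambda>a. inverse p * s a) {a. a \<noteq> 0} (inverse p * L)"
    by (rule ahas_sum_cmult_left)
  then show ?thesis
    using L p_nonzero by (intro exI[of _ L] exI[of _ "inverse p * L"]) (simp add: s_def field_simps)
qed

end

theorem lemma3p8:
  fixes \<iota> :: "'f::{finite,field} \<Rightarrow> 'c::field"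
    and \<theta> \<zeta> t :: 'c and absv :: "'c \<Rightarrow> real" and r :: nat and z :: "nat \<Rightarrow> 'c"
  assumes "Cinf_model \<iota> \<theta> absv"
    and "\<zeta> ^ (CARD('f) - 1) = - \<theta>"
    and "r \<ge> 2"
    and "z \<in> Omega \<iota> \<theta> absv r"
    and "absv t \<le> 1"
  shows "\<exists>L R.
    ahas_sum absv (\<lambda>a. evalA \<iota> (a 1) t / (\<Sum>i=1..r. evalA \<iota> (a i) \<theta> * z i))
      {a :: nat \<Rightarrow> 'f poly. (\<forall>i. i \<notin> {1..r} \<longrightarrow> a i = 0) \<and> a \<noteq> (\<lambda>_. 0)} L
    \<and> ahas_sum absv (\<lambda>a. evalA \<iota> a t * uA \<iota> \<theta> absv \<zeta> r a z) {a. a \<noteq> 0} R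
    \<and> L = pitilde \<iota> \<theta> absv \<zeta> * R"
proof -
  interpret Cinf \<iota> \<theta> absv
    by (rule Cinf.intro) (fact assms(1))
  interpret Kinf_lattice \<iota> \<theta> absv "pitilde \<iota> \<theta> absv \<zeta>" r z
    using assms(1,3,4) pitilde_nonzero[OF assms(2)]
    by unfold_locales (auto simp: Omega_def Kinf_independent_def)
  have uA: "uA \<iota> \<theta> absv \<zeta> r a z = inverse (expL absv lattice (pitilde \<iota> \<theta> absv \<zeta> * evalA \<iota> a \<theta> * z 1))"
    for a
    by (simp add: uA_def zlattice_def lattice_def)
  show ?thesis
    using eisenstein_sum_expansion[OF assms(5)]
    unfolding eisenstein_term_def[abs_def] coeff_vectors_def uA .
qed

end
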